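(* Let $\mathbf{A}=(A_{i,j})_{p\times p}$ be a deterministic symmetric $\{0,1\}$-valued matrix with zero diagonal, and let $\delta=\frac{2}{p(p-1)}\sum_{i<j}A_{i,j}$, $N=p(p-1)/2$. Let $\mathbf{Y},\mathbf{Y}_*,\mathbf{Y}_{**}$ be independent and identically distributed symmetric random matrices with zero diagonal, each generated as $Y_{i,j}=A_{i,j}I(\varepsilon_{i,j}=0)+I(\varepsilon_{i,j}=1)$ for $i\neq j$, where $\varepsilon_{i,j}=\varepsilon_{j,i}$, $\mathbb{P}(\varepsilon_{i,j}=1)=\alpha$, $\mathbb{P}(\varepsilon_{i,j}=0)=1-\alpha-\beta$, $\mathbb{P}(\varepsilon_{i,j}=-1)=\beta$ for all $i<j$, and $\{\varepsilon_{i,j}\}_{i<j}$ are independent. Define \[ \hat u_1=\frac{2}{p(p-1)}\sum_{i<j}Y_{i,j},\quad \hat u_2=\frac{1}{p(p-1)}\sum_{i<j}|Y_{i,j,*}-Y_{i,j}|,\quad \hat u_3=\frac{2}{3p(p-1)}\sum_{i<j}I(Y_{i,j,**}-2Y_{i,j,*}+Y_{i,j}=1\ \text{or}\ -2), \] and $u_1=(1-\delta)\alpha+\delta(1-\beta)$, $u_2=(1-\delta)\alpha(1-\alpha)+\delta\beta(1-\beta)$, $u_3=(1-\delta)\alpha(1-\alpha)^2+\delta\beta^2(1-\beta)$. Consider $p\to\infty$ (with $\mathbf{A}$, and hence $\delta$, depending on $p$). If $N_1=p(p-1)\delta\to\infty$ and $N_2=p(p-1)(1-\delta)\to\infty$,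 then \[ \sqrt{N}(\hat u_1-u_1,\hat u_2-u_2,\hat u_3-u_3)^{\mathrm{T}}\to_d\mathcal{N}(\mathbf{0},\boldsymbol{\Sigma}), \] where $\boldsymbol{\Sigma}=(\sigma_{ij})_{3\times3}$ is symmetric with, writing $\kappa_1=\alpha(1-\alpha)$, $\kappa_2=\beta(1-\beta)$: $\sigma_{11}=\delta\kappa_2+(1-\delta)\kappa_1$, $\sigma_{22}=\delta\kappa_2(1/2-\kappa_2)+(1-\delta)\kappa_1(1/2-\kappa_1)$, $\sigma_{33}=\delta\beta\kappa_2(1/3-\beta\kappa_2)+(1-\delta)\kappa_1(1-\alpha)\{1/3-\kappa_1(1-\alpha)\}$, $\sigma_{12}=\delta\kappa_2(\beta-1/2)+(1-\delta)\kappa_1(1/2-\alpha)$, $\sigma_{13}=\delta\kappa_2(\beta^2/3-2\kappa_2/3)+(1-\delta)\kappa_1\{(1-\alpha)^2/3-2\kappa_1/3\}$, $\sigma_{23}=\delta\beta\kappa_2(1/3-\kappa_2)+(1-\delta)(1-\alpha)\kappa_1(1/3-\kappa_1)$.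
   Context: Here $\alpha,\beta\ge0$ with $\alpha+\beta\le1$ are the error rates: $\mathbb{P}(Y_{i,j}=1\mid A_{i,j}=0)=\alpha$, $\mathbb{P}(Y_{i,j}=0\mid A_{i,j}=1)=\beta$. *)

theory Defs
  imports "HOL-Analysis.Analysis" "HOL-Probability.Probability"
begin

definition eps_pmf :: "real \<Rightarrow> real \<Rightarrow> int pmf" where
  "eps_pmf \<alpha> \<beta> = embed_pmf (\<lambda>k. if k = 1 then \<alpha> else if k = 0 then 1 - \<alpha> - \<beta>
                                    else if k = -1 then \<beta> else 0)"

text \<open>Errors (eps, eps_*, eps_**) for one pair, for the three iid copies Y, Y_*, Y_**.\<close>
definition eps3_pmf :: "real \<Rightarrow> real \<Rightarrow> (int \<times> int \<times> int) pmf" where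
  "eps3_pmf \<alpha> \<beta> = pair_pmf (eps_pmf \<alpha> \<beta>) (pair_pmf (eps_pmf \<alpha> \<beta>) (eps_pmf \<alpha> \<beta>))"

definition pairs :: "nat \<Rightarrow> (nat \<times> nat) set" where
  "pairs p = {(i, j). i < j \<and> j < p}"

text \<open>Joint law of all errors: independent across pairs i<j (eps_{j,i}=eps_{i,j}).\<close>
definition err_pmf :: "real \<Rightarrow> real \<Rightarrow> nat \<Rightarrow> (nat \<times> nat \<Rightarrow> int \<times> int \<times> int) pmf" where
  "err_pmf \<alpha> \<beta> p = Pi_pmf (pairs p) (0, 0, 0) (\<lambda>_. eps3_pmf \<alpha> \<beta>)"

definition Yval :: "real \<Rightarrow> int \<Rightarrow> real" where
  "Yval a e = a * (if e = 0 then 1 else 0) + (if e = 1 then 1 else 0)"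

definition dens :: "nat \<Rightarrow> (nat \<Rightarrow> nat \<Rightarrow> real) \<Rightarrow> real" where
  "dens p A = 2 / (real p * (real p - 1)) * (\<Sum>(i,j)\<in>pairs p. A i j)"

definition u1hat :: "nat \<Rightarrow> (nat \<Rightarrow> nat \<Rightarrow> real) \<Rightarrow> (nat \<times> nat \<Rightarrow> int \<times> int \<times> int) \<Rightarrow> real" where
  "u1hat p A \<omega> = 2 / (real p * (real p - 1)) *
     (\<Sum>(i,j)\<in>pairs p. Yval (A i j) (fst (\<omega> (i,j))))"

definition u2hat :: "nat \<Rightarrow> (nat \<Rightarrow> nat \<Rightarrow> real) \<Rightarrow> (nat \<times> nat \<Rightarrow> int \<times> int \<times> int) \<Rightarrow> real" where
  "u2hat p A \<omega> = 1 / (real p * (real p - 1)) *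
     (\<Sum>(i,j)\<in>pairs p. \<bar>Yval (A i j) (fst (snd (\<omega> (i,j)))) - Yval (A i j) (fst (\<omega> (i,j)))\<bar>)"

definition u3hat :: "nat \<Rightarrow> (nat \<Rightarrow> nat \<Rightarrow> real) \<Rightarrow> (nat \<times> nat \<Rightarrow> int \<times> int \<times> int) \<Rightarrow> real" where
  "u3hat p A \<omega> = 2 / (3 * real p * (real p - 1)) *
     (\<Sum>(i,j)\<in>pairs p.
        (let d = Yval (A i j) (snd (snd (\<omega> (i,j)))) - 2 * Yval (A i j) (fst (snd (\<omega> (i,j))))
                 + Yval (A i j) (fst (\<omega> (i,j)))
         in if d = 1 \<or> d = -2 then 1 else 0))"

definition u1 :: "real \<Rightarrow> real \<Rightarrow> real \<Rightarrow> real" where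
  "u1 \<alpha> \<beta> \<delta> = (1 - \<delta>) * \<alpha> + \<delta> * (1 - \<beta>)"
definition u2 :: "real \<Rightarrow> real \<Rightarrow> real \<Rightarrow> real" where
  "u2 \<alpha> \<beta> \<delta> = (1 - \<delta>) * \<alpha> * (1 - \<alpha>) + \<delta> * \<beta> * (1 - \<beta>)"
definition u3 :: "real \<Rightarrow> real \<Rightarrow> real \<Rightarrow> real" where
  "u3 \<alpha> \<beta> \<delta> = (1 - \<delta>) * \<alpha> * (1 - \<alpha>)^2 + \<delta> * \<beta>^2 * (1 - \<beta>)"

definition Sigma :: "real \<Rightarrow> real \<Rightarrow> real \<Rightarrow> real^3^3" where
  "Sigma \<alpha> \<beta> \<delta> = (let k1 = \<alpha> * (1 - \<alpha>); k2 = \<beta> * (1 - \<beta>);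
     s11 = \<delta> * k2 + (1 - \<delta>) * k1;
     s22 = \<delta> * k2 * (1/2 - k2) + (1 - \<delta>) * k1 * (1/2 - k1);
     s33 = \<delta> * \<beta> * k2 * (1/3 - \<beta> * k2) + (1 - \<delta>) * k1 * (1 - \<alpha>) * (1/3 - k1 * (1 - \<alpha>));
     s12 = \<delta> * k2 * (\<beta> - 1/2) + (1 - \<delta>) * k1 * (1/2 - \<alpha>);
     s13 = \<delta> * k2 * (\<beta>^2/3 - 2 * k2/3) + (1 - \<delta>) * k1 * ((1 - \<alpha>)^2/3 - 2 * k1/3);
     s23 = \<delta> * \<beta> * k2 * (1/3 - k2) + (1 - \<delta>) * (1 - \<alpha>) * k1 * (1/3 - k1)
   in vector [vector [s11, s12, s13], vector [s12, s22, s23], vector [s13, s23, s33]])"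

text \<open>mu is the multivariate normal law N(0, S) on R^3 (possibly degenerate),
  defined via its characteristic function.\<close>
definition is_mvnormal0 :: "real^3^3 \<Rightarrow> (real^3) measure \<Rightarrow> bool" where
  "is_mvnormal0 S \<mu> \<longleftrightarrow> prob_space \<mu> \<and> sets \<mu> = sets borel \<and>
     (\<forall>t. (CLINT x|\<mu>. cis (t \<bullet> x)) = complex_of_real (exp (- (t \<bullet> (S *v t)) / 2)))"

end

theory Submission
  imports Defs
begin

(* Up to the factor N^(-1/2), N = p (p - 1) / 2, the statistic is a sum over the
   pairs i < j of independent centred vectors with coordinates in [-1, 1]; the pair (i, j)
   has covariance Sigma at delta = A_ij, which is 0 or 1.  Since Sigma and the means u_k are
   affine in delta, these covariances and means average to Sigma and u at the density delta.
   A third-order Taylor bound for each factor of the characteristic function gives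
     |phi_p(t) - exp (- t . Sigma t / 2)| <= |t|_1^3 / (6 sqrt N) + |t|_1^4 / (8 N),
   hence convergence of characteristic functions; the same bound near t = 0 gives tightness
   of both sequences of laws.  Approximating a bounded continuous function uniformly on a large
   cube by a trigonometric polynomial (Stone-Weierstrass) then yields convergence of the
   expectations. *)

section \<open>Characteristic functions and trigonometric polynomials\<close>

definition char_vec :: "(real^'n) measure \<Rightarrow> real^'n \<Rightarrow> complex" where
  "char_vec M t = (CLINT x|M. cis (t \<bullet> x))"

inductive trig_poly :: "(real^'n \<Rightarrow> real) \<Rightarrow> bool" where
  monomial: "trig_poly (\<lambda>x. Re (c * cis (t \<bullet> x)))"
| add: "trig_poly f \<Longrightarrow> trig_poly g \<Longrightarrow> trig_poly (\<lambda>x. f x + g x)"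

lemma trig_poly_const: "trig_poly (\<lambda>x. c)"
  using trig_poly.monomial[of "complex_of_real c" 0] by simp

lemma trig_poly_sum:
  "finite I \<Longrightarrow> (\<And>i. i \<in> I \<Longrightarrow> trig_poly (f i)) \<Longrightarrow> trig_poly (\<lambda>x. \<Sum>i\<in>I. f i x)"
  by (induction I rule: finite_induct) (auto intro: trig_poly_const trig_poly.add)

lemma trig_poly_sin: "trig_poly (\<lambda>x. sin (t \<bullet> x))"
  using trig_poly.monomial[of "- \<i>" t] by simp

lemma Re_mult_Re: "Re a * Re b = Re (a * b / 2) + Re (a * cnj b / 2)"
  by (cases a; cases b) (simp add: field_simps)

lemma trig_monomial_mult:
  "Re (c * cis (t \<bullet> x)) * Re (d * cis (s \<bullet> x)) =
     Re ((c * d / 2) * cis ((t + s) \<bullet> x)) + Re ((c * cnj d / 2) * cis ((t - s) \<bullet> x))"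
proof -
  have "c * cis (t \<bullet> x) * (d * cis (s \<bullet> x)) / 2 = (c * d / 2) * cis ((t + s) \<bullet> x)"
    by (simp add: cis_mult[symmetric] algebra_simps)
  moreover have "c * cis (t \<bullet> x) * cnj (d * cis (s \<bullet> x)) / 2 = (c * cnj d / 2) * cis ((t - s) \<bullet> x)"
  proof -
    have "cis (t \<bullet> x) * cis (- (s \<bullet> x)) = cis ((t - s) \<bullet> x)"
      by (simp add: cis_mult inner_diff_left)
    then show ?thesis by (simp add: cis_cnj algebra_simps)
  qed
  ultimately show ?thesis by (simp only: Re_mult_Re)
qed

lemma trig_poly_mult:
  assumes "trig_poly f" "trig_poly g"
  shows "trig_poly (\<lambda>x. f x * g x)"
proof -
  have monomial_mult: "trig_poly (\<lambda>x. Re (c * cis (t \<bullet> x)) * h x)"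
    if "trig_poly h" for c t and h :: "real^'n \<Rightarrow> real"
    using that
  proof (induction rule: trig_poly.induct)
    case (monomial d s)
    show ?case unfolding trig_monomial_mult by (intro trig_poly.intros)
  next
    case (add h1 h2)
    then show ?case using trig_poly.add[OF add.IH] by (simp add: algebra_simps)
  qed
  show ?thesis using assms
  proof (induction rule: trig_poly.induct)
    case (monomial c t)
    then show ?case by (rule monomial_mult)
  next
    case (add f1 f2)
    then show ?case using trig_poly.add[OF add.IH] by (simp add: algebra_simps)
  qed
qed

lemma trig_poly_polynomial_of_sin:
  fixes P :: "real^'n \<Rightarrow> real"
  assumes "real_polynomial_function P"
  shows "trig_poly (\<lambda>x. P (\<chi> i. sin (x $ i / R)))"
  using assms
proof (induction rule: real_polynomial_function.induct)
  case (linear f)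
  then have lin: "linear f" using bounded_linear.linear by blast
  define cf where "cf i = f (axis i 1)" for i
  have fy: "f y = (\<Sum>i\<in>UNIV. y $ i * cf i)" for y :: "real^'n"
  proof -
    have "f y = f (\<Sum>i\<in>UNIV. y $ i *s axis i 1)" by (simp add: basis_expansion)
    also have "\<dots> = (\<Sum>i\<in>UNIV. y $ i * cf i)"
      by (simp add: linear_sum[OF lin] scalar_mult_eq_scaleR linear_scale[OF lin] cf_def)
    finally show ?thesis .
  qed
  have eq: "f (\<chi> i. sin (x $ i / R)) = (\<Sum>i\<in>UNIV. sin (axis i (1/R) \<bullet> x) * cf i)" for x
    unfolding fy by (simp add: inner_axis')
  show ?case unfolding eq
    by (intro trig_poly_sum trig_poly_mult trig_poly_sin trig_poly_const) auto
next
  case (const c)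
  show ?case by (rule trig_poly_const)
next
  case (add f g)
  show ?case using add.IH by (rule trig_poly.add)
next
  case (mult f g)
  show ?case using mult.IH by (rule trig_poly_mult)
qed

lemma trig_poly_bounded_continuous:
  "trig_poly g \<Longrightarrow> continuous_on UNIV g \<and> (\<exists>B. \<forall>x. \<bar>g x\<bar> \<le> B)"
proof (induction rule: trig_poly.induct)
  case (monomial c t)
  have "\<bar>Re (c * cis (t \<bullet> x))\<bar> \<le> cmod c" for x
    using abs_Re_le_cmod[of "c * cis (t \<bullet> x)"] by (simp add: norm_mult)
  then show ?case by (auto intro!: continuous_intros)
next
  case (add f g)
  then obtain B1 B2 where "\<forall>x. \<bar>f x\<bar> \<le> B1" "\<forall>x. \<bar>g x\<bar> \<le> B2" by blast
  then have "\<forall>x. \<bar>f x + g x\<bar> \<le> B1 + B2" by (metis abs_triangle_ineq add_mono order_trans)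
  with add show ?case by (auto intro!: continuous_intros)
qed

lemma integrable_bounded_continuous:
  fixes g :: "real^'n \<Rightarrow> 'b::{banach,second_countable_topology}"
  assumes "prob_space M" "sets M = sets borel" "continuous_on UNIV g" "\<And>x. norm (g x) \<le> B"
  shows "integrable M g"
proof -
  interpret prob_space M by fact
  have "g \<in> borel_measurable M"
    unfolding measurable_cong_sets[OF assms(2) refl] by (rule borel_measurable_continuous_onI[OF assms(3)])
  then show ?thesis by (intro integrable_const_bound[where B=B]) (use assms(4) in auto)
qed

lemma integrable_trig_poly:
  assumes "prob_space M" "sets M = sets borel" "trig_poly g"
  shows "integrable M g"
  using trig_poly_bounded_continuous[OF assms(3)] integrable_bounded_continuous[OF assms(1,2)]
  by (metis real_norm_def)

lemma integrable_cis_inner: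
  fixes M :: "(real^'n) measure"
  assumes "prob_space M" "sets M = sets borel"
  shows "integrable M (\<lambda>x. cis (t \<bullet> x))"
  by (rule integrable_bounded_continuous[OF assms, where B=1]) (auto intro!: continuous_intros)

lemma integral_trig_monomial:
  assumes "prob_space M" "sets M = sets borel"
  shows "(\<integral>x. Re (c * cis (t \<bullet> x)) \<partial>M) = Re (c * char_vec M t)"
proof -
  have "integrable M (\<lambda>x. c * cis (t \<bullet> x))"
    using integrable_cis_inner[OF assms] by simp
  then have "(\<integral>x. Re (c * cis (t \<bullet> x)) \<partial>M) = Re (\<integral>x. c * cis (t \<bullet> x) \<partial>M)"
    by (rule integral_bounded_linear[OF bounded_linear_Re])
  then show ?thesis unfolding char_vec_def by simp
qed

lemma Re_char_vec:
  assumes "prob_space M" "sets M = sets borel"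
  shows "Re (char_vec M t) = (\<integral>x. cos (t \<bullet> x) \<partial>M)"
  using integral_trig_monomial[OF assms, of 1 t] by simp

lemma integral_trig_poly_diff_tendsto_zero:
  fixes M M' :: "nat \<Rightarrow> (real^'n) measure"
  assumes "trig_poly g"
    and M: "\<And>n. prob_space (M n)" "\<And>n. sets (M n) = sets borel"
    and M': "\<And>n. prob_space (M' n)" "\<And>n. sets (M' n) = sets borel"
    and char: "\<And>t. (\<lambda>n. char_vec (M n) t - char_vec (M' n) t) \<longlonglongrightarrow> 0"
  shows "(\<lambda>n. (\<integral>x. g x \<partial>M n) - (\<integral>x. g x \<partial>M' n)) \<longlonglongrightarrow> 0"
  using assms(1)
proof (induction rule: trig_poly.induct)
  case (monomial c t)
  have "(\<lambda>n. Re (c * (char_vec (M n) t - char_vec (M' n) t))) \<longlonglongrightarrow> Re (c * 0)"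
    by (intro tendsto_intros char)
  moreover have "(\<integral>x. Re (c * cis (t \<bullet> x)) \<partial>M n) - (\<integral>x. Re (c * cis (t \<bullet> x)) \<partial>M' n)
     = Re (c * (char_vec (M n) t - char_vec (M' n) t))" for n
    by (simp only: integral_trig_monomial M M' right_diff_distrib minus_complex.sel)
  ultimately show ?case by simp
next
  case (add f g)
  have "(\<lambda>n. ((\<integral>x. f x \<partial>M n) - (\<integral>x. f x \<partial>M' n)) + ((\<integral>x. g x \<partial>M n) - (\<integral>x. g x \<partial>M' n)))
          \<longlonglongrightarrow> 0 + 0"
    by (intro tendsto_add add.IH)
  then show ?case
    using add.hyps by (simp add: integrable_trig_poly M M' algebra_simps)
qed

(* Stone-Weierstrass on the cube [-1, 1]^n, transported by x \<mapsto> (sin (x_i / R))_i,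
   which arcsin inverts on the cube of radius R because 1 < pi / 2. *)
lemma trig_poly_approx:
  fixes f :: "real^'n \<Rightarrow> real"
  assumes f: "continuous_on UNIV f" and fB: "\<And>x. \<bar>f x\<bar> \<le> B" and R: "R > 0" and e: "e > 0"
  obtains g where "trig_poly g" "\<And>x. \<bar>g x\<bar> \<le> B + e"
    "\<And>x. (\<forall>i. \<bar>x $ i\<bar> \<le> R) \<Longrightarrow> \<bar>f x - g x\<bar> \<le> e"
proof -
  define \<Psi> :: "real^'n \<Rightarrow> real^'n" where "\<Psi> y = (\<chi> i. R * arcsin (y $ i))" for y
  define \<Phi> :: "real^'n \<Rightarrow> real^'n" where "\<Phi> x = (\<chi> i. sin (x $ i / R))" for x
  define S :: "(real^'n) set" where "S = cbox (-1) 1"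
  have S: "y \<in> S \<longleftrightarrow> (\<forall>i. -1 \<le> y $ i \<and> y $ i \<le> 1)" for y
    by (simp add: S_def mem_box_cart)
  have "continuous_on S \<Psi>"
    unfolding \<Psi>_def
    by (intro continuous_on_vec_lambda continuous_intros continuous_on_arcsin) (auto simp: S)
  then have "continuous_on S (\<lambda>y. f (\<Psi> y))"
    by (rule continuous_on_compose2[OF f]) auto
  then obtain P where P: "real_polynomial_function P" "\<And>y. y \<in> S \<Longrightarrow> \<bar>f (\<Psi> y) - P y\<bar> < e"
    using Stone_Weierstrass_real_polynomial_function[of S "\<lambda>y. f (\<Psi> y)" e] e
    unfolding S_def by (metis compact_cbox)
  have \<Phi>S: "\<Phi> x \<in> S" for x by (simp add: S \<Phi>_def)
  show ?thesis
  proof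
    show "trig_poly (\<lambda>x. P (\<Phi> x))" unfolding \<Phi>_def by (rule trig_poly_polynomial_of_sin[OF P(1)])
    show "\<bar>P (\<Phi> x)\<bar> \<le> B + e" for x
      using P(2)[OF \<Phi>S[of x]] fB[of "\<Psi> (\<Phi> x)"] by linarith
    show "\<bar>f x - P (\<Phi> x)\<bar> \<le> e" if "\<forall>i. \<bar>x $ i\<bar> \<le> R" for x
    proof -
      have "\<Psi> (\<Phi> x) = x"
      proof (subst vec_eq_iff, intro allI)
        fix i
        have "\<bar>x $ i / R\<bar> \<le> 1" using that R by (simp add: divide_le_eq_1)
        moreover have "1 < pi / 2" using pi_gt3 by linarith
        ultimately have "- (pi/2) \<le> x $ i / R" "x $ i / R \<le> pi / 2"
          by (simp_all only: abs_le_iff) linarith+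
        then have "arcsin (sin (x $ i / R)) = x $ i / R"
          by (intro arcsin_sin)
        then show "\<Psi> (\<Phi> x) $ i = x $ i" using R by (simp add: \<Psi>_def \<Phi>_def)
      qed
      then show ?thesis using P(2)[OF \<Phi>S[of x]] by simp
    qed
  qed
qed

section \<open>Tightness and convergence of expectations\<close>

definition outside_cube :: "real \<Rightarrow> (real^'n) set" where
  "outside_cube R = {x. \<exists>i. R < \<bar>x $ i\<bar>}"

lemma outside_cube_eq_Union: "outside_cube R = (\<Union>i. {x. R < \<bar>x $ i\<bar>})"
  by (auto simp: outside_cube_def)

lemma open_outside_cube: "open (outside_cube R)"
  unfolding outside_cube_eq_Union by (intro open_UN ballI open_Collect_less continuous_intros)

lemma integral_diff_le_outside_cube:
  fixes f g :: "real^'n \<Rightarrow> real"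
  assumes M: "prob_space M" "sets M = sets borel"
    and f: "continuous_on UNIV f" "\<And>x. \<bar>f x\<bar> \<le> B"
    and g: "continuous_on UNIV g" "\<And>x. \<bar>g x\<bar> \<le> B'"
    and fg: "\<And>x. x \<notin> outside_cube R \<Longrightarrow> \<bar>f x - g x\<bar> \<le> e"
    and e: "e \<ge> 0"
  shows "\<bar>(\<integral>x. f x \<partial>M) - (\<integral>x. g x \<partial>M)\<bar> \<le> e + (B + B') * measure M (outside_cube R)"
proof -
  interpret prob_space M by fact
  have If: "integrable M f" using integrable_bounded_continuous[OF M f(1), of B] f(2) by simp
  have Ig: "integrable M g" using integrable_bounded_continuous[OF M g(1), of B'] g(2) by simp
  have sets: "outside_cube R \<in> sets M" using M(2) borel_open[OF open_outside_cube] by simp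
  have Iind: "integrable M (indicat_real (outside_cube R))"
    using sets by (intro integrable_real_indicator) (auto simp: emeasure_eq_measure)
  have "\<bar>(\<integral>x. f x \<partial>M) - (\<integral>x. g x \<partial>M)\<bar> = \<bar>\<integral>x. f x - g x \<partial>M\<bar>"
    using If Ig by simp
  also have "\<dots> \<le> (\<integral>x. \<bar>f x - g x\<bar> \<partial>M)" by (rule integral_abs_bound)
  also have "\<dots> \<le> (\<integral>x. e + (B + B') * indicator (outside_cube R) x \<partial>M)"
  proof (rule integral_mono)
    fix x
    show "\<bar>f x - g x\<bar> \<le> e + (B + B') * indicator (outside_cube R) x"
      using f(2)[of x] g(2)[of x] fg[of x] e by (cases "x \<in> outside_cube R") auto
  qed (use If Ig Iind in auto)
  also have "\<dots> = e + (B + B') * measure M (outside_cube R)"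
    using Iind sets by (simp add: prob_space emeasure_eq_measure)
  finally show ?thesis .
qed

definition tight_seq :: "(nat \<Rightarrow> (real^'n) measure) \<Rightarrow> bool" where
  "tight_seq M \<longleftrightarrow> (\<forall>\<eta>>0. \<exists>R>0. eventually (\<lambda>n. measure (M n) (outside_cube R) \<le> \<eta>) sequentially)"

lemma outside_cube_antimono: "R \<le> R' \<Longrightarrow> outside_cube R' \<subseteq> outside_cube R"
  unfolding outside_cube_def by (auto intro: le_less_trans)

lemma measure_outside_cube_antimono:
  assumes "prob_space M" "sets M = sets borel" "R \<le> R'"
  shows "measure M (outside_cube R') \<le> measure M (outside_cube R)"
proof -
  interpret prob_space M by fact
  show ?thesis
    using assms(2) outside_cube_antimono[OF assms(3)]
    by (intro finite_measure_mono) (simp_all add: borel_open open_outside_cube)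
qed

lemma tight_seq_common_radius:
  assumes M: "tight_seq M" "\<And>n. prob_space (M n)" "\<And>n. sets (M n) = sets borel"
    and M': "tight_seq M'" "\<And>n. prob_space (M' n)" "\<And>n. sets (M' n) = sets borel"
    and "\<eta> > 0"
  obtains R where "R > 0"
    "eventually (\<lambda>n. measure (M n) (outside_cube R) \<le> \<eta> \<and> measure (M' n) (outside_cube R) \<le> \<eta>) sequentially"
proof -
  obtain R1 R2 where "R1 > 0" and
    tail1: "eventually (\<lambda>n. measure (M n) (outside_cube R1) \<le> \<eta>) sequentially" and
    tail2: "eventually (\<lambda>n. measure (M' n) (outside_cube R2) \<le> \<eta>) sequentially"
    using M(1) M'(1) \<open>\<eta> > 0\<close> unfolding tight_seq_def by blast
  have "eventually (\<lambda>n. measure (M n) (outside_cube (max R1 R2)) \<le> \<eta>) sequentially"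
    using tail1 by eventually_elim
      (rule order_trans[OF measure_outside_cube_antimono[OF M(2,3)]], auto)
  moreover have "eventually (\<lambda>n. measure (M' n) (outside_cube (max R1 R2)) \<le> \<eta>) sequentially"
    using tail2 by eventually_elim
      (rule order_trans[OF measure_outside_cube_antimono[OF M'(2,3)]], auto)
  ultimately have "eventually (\<lambda>n. measure (M n) (outside_cube (max R1 R2)) \<le> \<eta> \<and>
                          measure (M' n) (outside_cube (max R1 R2)) \<le> \<eta>) sequentially"
    by (rule eventually_conj)
  with \<open>R1 > 0\<close> show ?thesis by (intro that[of "max R1 R2"]) auto
qed

lemma integral_diff_tendsto_zero_from_char:
  fixes M M' :: "nat \<Rightarrow> (real^'n) measure" and f :: "real^'n \<Rightarrow> real"
  assumes M: "\<And>n. prob_space (M n)" "\<And>n. sets (M n) = sets borel"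
    and M': "\<And>n. prob_space (M' n)" "\<And>n. sets (M' n) = sets borel"
    and char: "\<And>t. (\<lambda>n. char_vec (M n) t - char_vec (M' n) t) \<longlonglongrightarrow> 0"
    and tight: "tight_seq M" "tight_seq M'"
    and f: "continuous_on UNIV f" and fB: "\<And>x. \<bar>f x\<bar> \<le> B"
  shows "(\<lambda>n. (\<integral>x. f x \<partial>M n) - (\<integral>x. f x \<partial>M' n)) \<longlonglongrightarrow> 0"
proof (rule tendstoI)
  fix \<epsilon> :: real assume \<epsilon>: "\<epsilon> > 0"
  have B0: "B \<ge> 0" using fB[of 0] by linarith
  define e where "e = \<epsilon> / 8"
  define c where "c = 2 * B + e + 1"
  have e0: "e > 0" and c0: "c > 0" using \<epsilon> B0 by (auto simp: e_def c_def)
  obtain R where R: "R > 0" and small_tails: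
    "eventually (\<lambda>n. measure (M n) (outside_cube R) \<le> \<epsilon> / (8 * c) \<and>
                     measure (M' n) (outside_cube R) \<le> \<epsilon> / (8 * c)) sequentially"
    using tight_seq_common_radius[OF tight(1) M tight(2) M', of "\<epsilon> / (8 * c)"] \<epsilon> c0 by auto
  obtain g where g: "trig_poly g" "\<And>x. \<bar>g x\<bar> \<le> B + e"
    and fg_cube: "\<And>x. (\<forall>i. \<bar>x $ i\<bar> \<le> R) \<Longrightarrow> \<bar>f x - g x\<bar> \<le> e"
    using trig_poly_approx[OF f fB R e0] by blast
  have gc: "continuous_on UNIV g" using trig_poly_bounded_continuous[OF g(1)] by blast
  have fg: "\<bar>f x - g x\<bar> \<le> e" if "x \<notin> outside_cube R" for x
    using that fg_cube[of x] by (auto simp: outside_cube_def not_less)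
  have g_close: "eventually (\<lambda>n. \<bar>(\<integral>x. g x \<partial>M n) - (\<integral>x. g x \<partial>M' n)\<bar> < \<epsilon> / 4) sequentially"
    using tendstoD[OF integral_trig_poly_diff_tendsto_zero[OF g(1) M M' char], of "\<epsilon>/4"] \<epsilon>
    by (simp add: dist_real_def)
  have f_near_g: "\<bar>(\<integral>x. f x \<partial>N) - (\<integral>x. g x \<partial>N)\<bar> \<le> \<epsilon> / 4"
    if N: "prob_space N" "sets N = sets borel" "measure N (outside_cube R) \<le> \<epsilon> / (8 * c)" for N
  proof -
    have "\<bar>(\<integral>x. f x \<partial>N) - (\<integral>x. g x \<partial>N)\<bar> \<le> e + (B + (B + e)) * measure N (outside_cube R)"
      by (rule integral_diff_le_outside_cube[OF N(1,2) f fB gc g(2) fg]) (use e0 in auto)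
    also have "\<dots> \<le> e + c * (\<epsilon> / (8 * c))"
      using N(3) B0 e0 by (intro add_left_mono mult_mono) (auto simp: c_def)
    also have "\<dots> = \<epsilon> / 4" using c0 by (simp add: e_def)
    finally show ?thesis .
  qed
  show "eventually (\<lambda>n. dist ((\<integral>x. f x \<partial>M n) - (\<integral>x. f x \<partial>M' n)) 0 < \<epsilon>) sequentially"
    using small_tails g_close
  proof eventually_elim
    case (elim n)
    have "\<bar>(\<integral>x. f x \<partial>M n) - (\<integral>x. g x \<partial>M n)\<bar> \<le> \<epsilon> / 4"
      "\<bar>(\<integral>x. f x \<partial>M' n) - (\<integral>x. g x \<partial>M' n)\<bar> \<le> \<epsilon> / 4"
      using f_near_g[OF M] f_near_g[OF M'] elim(1) by auto
    with elim(2) show ?case unfolding dist_real_def diff_0_right by arith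
  qed
qed

lemma one_minus_cos_ge:
  fixes u :: real
  assumes "\<bar>u\<bar> \<le> 1"
  shows "u\<^sup>2 / 4 \<le> 1 - cos u"
proof -
  obtain t where t: "cos u = (\<Sum>m<4. cos_coeff m * u^m) + cos (t + 1/2 * real 4 * pi) / fact 4 * u^4"
    using Maclaurin_cos_expansion by blast
  have "cos_coeff 0 = 1" "cos_coeff 1 = 0" "cos_coeff 2 = - 1/2" "cos_coeff 3 = 0"
    by (simp_all add: cos_coeff_def)
  then have taylor: "(\<Sum>m<4. cos_coeff m * u^m) = 1 - u\<^sup>2/2"
    by (simp add: eval_nat_numeral)
  have "cos (t + 1/2 * real 4 * pi) / fact 4 * u^4 \<le> 1 / fact 4 * u^4"
    by (intro mult_right_mono divide_right_mono) (auto simp: zero_le_even_power)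
  then have "cos u \<le> 1 - u\<^sup>2/2 + u^4/24"
    using t taylor by (simp add: eval_nat_numeral)
  moreover have "u^4 \<le> u\<^sup>2"
  proof -
    have "u\<^sup>2 \<le> 1" using assms by (simp add: abs_square_le_1)
    then have "u\<^sup>2 * u\<^sup>2 \<le> u\<^sup>2 * 1" by (intro mult_left_mono) auto
    then show ?thesis by (simp add: eval_nat_numeral)
  qed
  moreover have "0 \<le> u\<^sup>2" by simp
  ultimately show ?thesis by linarith
qed

lemma measure_coord_band_le_char:
  fixes M :: "(real^'n) measure"
  assumes M: "prob_space M" "sets M = sets borel"
    and s: "0 < s" and char: "Re (1 - char_vec M (s *\<^sub>R axis i 1)) \<le> C * s\<^sup>2"
    and R: "R > 0"
  shows "measure M {x. R < \<bar>x $ i\<bar> \<and> s * \<bar>x $ i\<bar> \<le> 1} \<le> 4 * C / R\<^sup>2"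
proof -
  interpret prob_space M by fact
  define A where "A = {x::real^'n. R < \<bar>x $ i\<bar> \<and> s * \<bar>x $ i\<bar> \<le> 1}"
  have "A = {x::real^'n. R < \<bar>x $ i\<bar>} \<inter> {x. s * \<bar>x $ i\<bar> \<le> 1}" by (auto simp: A_def)
  then have A: "A \<in> sets M"
    using M(2) by (simp add: open_Collect_less closed_Collect_le continuous_intros)
  define h where "h x = 2 * (1 - cos (s * x $ i)) / s\<^sup>2" for x :: "real^'n"
  have icos: "integrable M (\<lambda>x. cos (s * x $ i))"
    by (rule integrable_bounded_continuous[OF M, where B=1]) (auto intro!: continuous_intros)
  have "(\<integral>x. h x \<partial>M) = 2 / s\<^sup>2 * (1 - Re (char_vec M (s *\<^sub>R axis i 1)))"
    unfolding h_def using icos by (simp add: Re_char_vec[OF M] inner_axis' prob_space field_simps)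
  also have "\<dots> \<le> 2 / s\<^sup>2 * (C * s\<^sup>2)"
    using char by (intro mult_left_mono) auto
  finally have h_le: "(\<integral>x. h x \<partial>M) \<le> 2 * C" using s by simp
  \<comment> \<open>On the band, \<open>1 - cos u \<ge> u\<^sup>2/4\<close> with \<open>u = s x\<^sub>i\<close> bounds \<open>h\<close> below by \<open>R\<^sup>2/2\<close>.\<close>
  have "R\<^sup>2 / 2 * measure M A = (\<integral>x. R\<^sup>2 / 2 * indicator A x \<partial>M)"
    using A by (simp add: emeasure_eq_measure)
  also have "\<dots> \<le> (\<integral>x. h x \<partial>M)"
  proof (rule integral_mono)
    fix x :: "real^'n"
    show "R\<^sup>2 / 2 * indicat_real A x \<le> h x"
    proof (cases "x \<in> A")
      case True
      then have x: "R < \<bar>x $ i\<bar>" "\<bar>s * x $ i\<bar> \<le> 1" using s by (auto simp: A_def abs_mult)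
      have cos_le: "(s * x $ i)\<^sup>2 / 4 \<le> 1 - cos (s * x $ i)" by (rule one_minus_cos_ge[OF x(2)])
      have "R\<^sup>2 \<le> (x $ i)\<^sup>2" using x(1) R
        by (metis abs_of_pos less_imp_le power_mono power2_abs)
      also have "(x $ i)\<^sup>2 = 2 * ((s * x $ i)\<^sup>2 / 4) * 2 / s\<^sup>2" using s by (simp add: power_mult_distrib)
      also have "\<dots> \<le> 2 * (1 - cos (s * x $ i)) * 2 / s\<^sup>2"
        using cos_le s by (intro divide_right_mono mult_right_mono mult_left_mono) auto
      finally show ?thesis using True by (simp add: h_def)
    qed (simp add: h_def)
  qed (use icos A in \<open>auto simp: h_def emeasure_eq_measure\<close>)
  finally show ?thesis using h_le R by (simp add: A_def field_simps)
qed

lemma measure_coord_gt_le_char: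
  fixes M :: "(real^'n) measure"
  assumes M: "prob_space M" "sets M = sets borel"
    and char: "\<And>s. 0 < s \<Longrightarrow> s \<le> 1 \<Longrightarrow> Re (1 - char_vec M (s *\<^sub>R axis i 1)) \<le> C * s\<^sup>2"
    and R: "R > 0"
  shows "measure M {x. R < \<bar>x $ i\<bar>} \<le> 4 * C / R\<^sup>2"
proof -
  interpret prob_space M by fact
  define A where "A n = {x::real^'n. R < \<bar>x $ i\<bar> \<and> 1 / real (Suc n) * \<bar>x $ i\<bar> \<le> 1}" for n
  have A: "A n \<in> sets M" for n
  proof -
    have "A n = {x::real^'n. R < \<bar>x $ i\<bar>} \<inter> {x. 1 / real (Suc n) * \<bar>x $ i\<bar> \<le> 1}"
      by (auto simp: A_def)
    then show ?thesis
      using M(2) by (simp add: open_Collect_less closed_Collect_le continuous_intros)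
  qed
  have "(\<Union>n. A n) = {x. R < \<bar>x $ i\<bar>}"
  proof safe
    fix x :: "real^'n" assume "R < \<bar>x $ i\<bar>"
    moreover obtain n where "\<bar>x $ i\<bar> \<le> real n" using real_arch_simple by blast
    ultimately show "x \<in> (\<Union>n. A n)" by (auto simp: A_def field_simps intro!: exI[of _ n])
  qed (auto simp: A_def)
  moreover have "(\<lambda>n. measure M (A n)) \<longlonglongrightarrow> measure M (\<Union>n. A n)"
  proof (intro finite_Lim_measure_incseq)
    show "incseq A"
      unfolding incseq_def A_def by (auto intro: order_trans[OF mult_right_mono] simp: frac_le)
  qed (use A in auto)
  moreover have "measure M (A n) \<le> 4 * C / R\<^sup>2" for n
    unfolding A_def by (intro measure_coord_band_le_char[OF M _ char R]) auto
  ultimately show ?thesis by (intro LIMSEQ_le_const2) auto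
qed

lemma measure_outside_cube_le_char:
  fixes M :: "(real^'n) measure"
  assumes M: "prob_space M" "sets M = sets borel"
    and char: "\<And>i s. 0 < s \<Longrightarrow> s \<le> 1 \<Longrightarrow> Re (1 - char_vec M (s *\<^sub>R axis i 1)) \<le> C * s\<^sup>2"
    and R: "R > 0"
  shows "measure M (outside_cube R) \<le> CARD('n) * (4 * C / R\<^sup>2)"
proof -
  interpret prob_space M by fact
  have "{x::real^'n. R < \<bar>x $ i\<bar>} \<in> sets M" for i
    using M(2) by (simp add: open_Collect_less continuous_intros)
  then have "measure M (outside_cube R) \<le> (\<Sum>i\<in>UNIV. measure M {x. R < \<bar>x $ i\<bar>})"
    unfolding outside_cube_eq_Union by (simp add: finite_measure_subadditive_finite image_subset_iff)
  also have "\<dots> \<le> (\<Sum>i\<in>(UNIV::'n set). 4 * C / R\<^sup>2)"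
    by (intro sum_mono measure_coord_gt_le_char[OF M char R])
  finally show ?thesis by simp
qed

lemma tight_seq_if_char_near_zero:
  fixes M :: "nat \<Rightarrow> (real^'n) measure"
  assumes M: "\<And>n. prob_space (M n)" "\<And>n. sets (M n) = sets borel"
    and near_zero: "eventually (\<lambda>n. \<forall>i s. 0 < s \<longrightarrow> s \<le> 1 \<longrightarrow>
                        Re (1 - char_vec (M n) (s *\<^sub>R axis i 1)) \<le> C * s\<^sup>2) sequentially"
  shows "tight_seq M"
  unfolding tight_seq_def
proof (intro allI impI)
  fix \<eta> :: real assume \<eta>: "\<eta> > 0"
  define K where "K = CARD('n) * 4 * (\<bar>C\<bar> + 1)"
  define R where "R = sqrt (K / \<eta>)"
  have K: "K > 0" by (simp add: K_def add_pos_nonneg)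
  then have R: "R > 0" and R2: "R\<^sup>2 = K / \<eta>" using \<eta> by (simp_all add: R_def)
  have "eventually (\<lambda>n. measure (M n) (outside_cube R) \<le> \<eta>) sequentially"
    using near_zero
  proof eventually_elim
    case (elim n)
    then have "measure (M n) (outside_cube R) \<le> CARD('n) * (4 * C / R\<^sup>2)"
      by (intro measure_outside_cube_le_char[OF M(1)[of n] M(2)[of n] _ R]) auto
    also have "\<dots> \<le> K / R\<^sup>2"
      using R by (simp add: K_def divide_right_mono)
    also have "\<dots> = \<eta>" using K \<eta> by (simp add: R2)
    finally show ?case .
  qed
  with R show "\<exists>R>0. eventually (\<lambda>n. measure (M n) (outside_cube R) \<le> \<eta>) sequentially" by blast
qed

lemma sum_mult_sum_swap:
  "(\<Sum>e\<in>E. (\<Sum>i\<in>I. c i * g i e) * w e :: real) = (\<Sum>i\<in>I. c i * (\<Sum>e\<in>E. g i e * w e))"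
proof -
  have "(\<Sum>e\<in>E. (\<Sum>i\<in>I. c i * g i e) * w e) = (\<Sum>e\<in>E. \<Sum>i\<in>I. c i * (g i e * w e))"
    by (simp add: sum_distrib_right mult.assoc)
  also have "\<dots> = (\<Sum>i\<in>I. \<Sum>e\<in>E. c i * (g i e * w e))" by (rule sum.swap)
  finally show ?thesis by (simp add: sum_distrib_left)
qed

lemma sum_mult_double_sum_swap:
  "(\<Sum>e\<in>E. (\<Sum>i\<in>I. \<Sum>j\<in>J. c i j * g i j e) * w e :: real) =
     (\<Sum>i\<in>I. \<Sum>j\<in>J. c i j * (\<Sum>e\<in>E. g i j e * w e))"
proof -
  have "(\<Sum>e\<in>E. (\<Sum>i\<in>I. \<Sum>j\<in>J. c i j * g i j e) * w e) =
          (\<Sum>i\<in>I. \<Sum>e\<in>E. (\<Sum>j\<in>J. c i j * g i j e) * w e)"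
    by (simp add: sum_distrib_right sum.swap[of _ E])
  then show ?thesis by (simp only: sum_mult_sum_swap)
qed

lemma inner_matrix_vector_mult_eq_sum:
  "t \<bullet> (S *v t) = (\<Sum>i\<in>UNIV. \<Sum>j\<in>UNIV. (t $ i * t $ j) * S $ i $ j)"
  by (simp add: inner_vec_def matrix_vector_mult_def sum_distrib_left mult_ac)

lemma expectation_cis_approx:
  fixes s :: "'a \<Rightarrow> real"
  assumes "prob_space M" "s \<in> borel_measurable M" "\<And>x. \<bar>s x\<bar> \<le> K"
    and mean: "(\<integral>x. s x \<partial>M) = 0" and var: "(\<integral>x. (s x)\<^sup>2 \<partial>M) = v"
  shows "cmod ((CLINT x|M. cis (s x)) - complex_of_real (1 - v / 2)) \<le> K^3 / 6"
proof -
  interpret prob_space M by fact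
  have int: "integrable M (\<lambda>x. (s x)^k)" for k
    by (rule integrable_const_bound[where B="K^k"])
       (use assms(2,3) in \<open>auto simp: power_abs intro!: power_mono\<close>)
  have int_c: "integrable M (\<lambda>x. complex_of_real ((s x)^k))" for k
    using int[of k] by (simp del: of_real_power)
  have "(\<lambda>x. cis (s x)) \<in> borel_measurable M"
    by (intro borel_measurable_continuous_on[OF _ assms(2)] continuous_intros)
  then have int_cis: "integrable M (\<lambda>x. cis (s x))"
    by (intro integrable_const_bound[where B=1]) auto
  define h where "h x = cis (s x) - (1 + \<i> * complex_of_real (s x) - complex_of_real ((s x)\<^sup>2) / 2)" for x
  have int_h: "integrable M h"
    unfolding h_def using int_cis int_c[of 1] int_c[of 2] by simp
  have "(CLINT x|M. h x) = (CLINT x|M. cis (s x)) -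
      (1 + \<i> * (CLINT x|M. complex_of_real (s x)) - (CLINT x|M. complex_of_real ((s x)\<^sup>2)) / 2)"
    unfolding h_def using int_cis int_c[of 1] int_c[of 2] by (simp add: prob_space)
  then have "(CLINT x|M. h x) = (CLINT x|M. cis (s x)) - complex_of_real (1 - v / 2)"
    by (simp del: of_real_power add: integral_complex_of_real mean var)
  moreover have h_le: "cmod (h x) \<le> K^3 / 6" for x
  proof -
    have "(\<Sum>k\<le>2. (\<i> * complex_of_real (s x))^k / fact k) =
            1 + \<i> * complex_of_real (s x) - complex_of_real ((s x)\<^sup>2) / 2"
      by (simp add: eval_nat_numeral power2_eq_square field_simps)
    then have "cmod (h x) \<le> \<bar>s x\<bar> ^ 3 / 6"
      using iexp_approx1[of "s x" 2] by (simp add: h_def cis_conv_exp eval_nat_numeral)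
    also have "\<dots> \<le> K^3 / 6"
      using assms(3)[of x] by (intro divide_right_mono power_mono) auto
    finally show ?thesis .
  qed
  then have "cmod (CLINT x|M. h x) \<le> (\<integral>x. K^3 / 6 \<partial>M)"
    using int_h by (intro order.trans[OF integral_norm_bound] integral_mono) auto
  ultimately show ?thesis by (simp add: prob_space)
qed

lemma exp_minus_approx:
  fixes y :: real
  assumes y: "y \<ge> 0"
  shows "\<bar>exp (- y) - (1 - y)\<bar> \<le> y\<^sup>2 / 2"
proof -
  have lo: "1 - y \<le> exp (- y)" using exp_ge_add_one_self[of "-y"] by simp
  have pos: "0 < 1 + y + y\<^sup>2 / 2" using y by (simp add: add_pos_nonneg)
  have "1 + y + y\<^sup>2 / 2 \<le> exp y" using exp_lower_Taylor_quadratic[OF y] .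
  then have "exp (- y) \<le> 1 / (1 + y + y\<^sup>2 / 2)"
    using pos by (simp add: exp_minus divide_simps)
  also have "\<dots> \<le> 1 - y + y\<^sup>2 / 2"
  proof -
    have "(1 - y + y\<^sup>2 / 2) * (1 + y + y\<^sup>2 / 2) = 1 + y^4 / 4"
      by (simp add: algebra_simps power2_eq_square power4_eq_xxxx)
    then have "1 \<le> (1 - y + y\<^sup>2 / 2) * (1 + y + y\<^sup>2 / 2)" by simp
    then show ?thesis using pos by (simp add: divide_le_eq)
  qed
  finally show ?thesis using lo by simp
qed

lemma cmod_one_minus_exp_le:
  assumes "x \<ge> 0"
  shows "cmod (1 - complex_of_real (exp (- x / 2))) \<le> x / 2"
proof -
  have "1 - complex_of_real (exp (- x / 2)) = complex_of_real (1 - exp (- x / 2))" by simp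
  moreover have "exp (- x / 2) \<le> 1" "1 - x / 2 \<le> exp (- x / 2)"
    using assms exp_ge_add_one_self[of "- x / 2"] by auto
  ultimately show ?thesis by (simp only: norm_of_real)
qed

lemma expectation_prod_Pi_pmf_complex:
  fixes F :: "'k \<Rightarrow> 'a \<Rightarrow> complex"
  assumes fin: "finite I" and bnd: "\<And>k x. norm (F k x) \<le> 1"
  shows "measure_pmf.expectation (Pi_pmf I d P) (\<lambda>\<omega>. \<Prod>k\<in>I. F k (\<omega> k)) =
         (\<Prod>k\<in>I. measure_pmf.expectation (P k) (F k))"
proof -
  have "prob_space.indep_vars (measure_pmf (Pi_pmf I d P)) (\<lambda>_. borel) (\<lambda>k \<omega>. F k (\<omega> k)) I"
    using prob_space.indep_vars_compose2[OF measure_pmf.prob_space_axioms indep_vars_Pi_pmf[OF fin],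
        of "\<lambda>k x. F k x" "\<lambda>_. borel"] by simp
  moreover have "integrable (measure_pmf (Pi_pmf I d P)) (\<lambda>\<omega>. F k (\<omega> k))" for k
    by (rule measure_pmf.integrable_const_bound[where B=1]) (auto simp: bnd)
  ultimately have "measure_pmf.expectation (Pi_pmf I d P) (\<lambda>\<omega>. \<Prod>k\<in>I. F k (\<omega> k)) =
      (\<Prod>k\<in>I. measure_pmf.expectation (Pi_pmf I d P) (\<lambda>\<omega>. F k (\<omega> k)))"
    by (intro prob_space.indep_vars_lebesgue_integral[OF measure_pmf.prob_space_axioms fin])
  also have "\<dots> = (\<Prod>k\<in>I. measure_pmf.expectation (P k) (F k))"
  proof (rule prod.cong[OF refl])
    fix k assume "k \<in> I"
    have "measure_pmf.expectation (Pi_pmf I d P) (\<lambda>\<omega>. F k (\<omega> k)) =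
          measure_pmf.expectation (map_pmf (\<lambda>\<omega>. \<omega> k) (Pi_pmf I d P)) (F k)"
      by simp
    also have "\<dots> = measure_pmf.expectation (P k) (F k)"
      using \<open>k \<in> I\<close> by (simp add: Pi_pmf_component[OF fin])
    finally show "measure_pmf.expectation (Pi_pmf I d P) (\<lambda>\<omega>. F k (\<omega> k)) =
                  measure_pmf.expectation (P k) (F k)" .
  qed
  finally show ?thesis .
qed

lemma cis_sum: "finite I \<Longrightarrow> cis (\<Sum>k\<in>I. f k) = (\<Prod>k\<in>I. cis (f k))"
  by (induction I rule: finite_induct) (simp_all add: cis_mult[symmetric])

lemma sum_affine_eq_card_scaleR_mean:
  fixes g :: "real \<Rightarrow> 'a::real_vector"
  assumes "finite I" "I \<noteq> {}" "\<And>x. g x = b + x *\<^sub>R c"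
  shows "(\<Sum>k\<in>I. g (a k)) = real (card I) *\<^sub>R g ((\<Sum>k\<in>I. a k) / real (card I))"
  using assms by (simp add: sum.distrib scaleR_sum_left[symmetric] scaleR_add_right sum_constant_scaleR)

section \<open>A single pair of the error model\<close>

definition eps_weight :: "real \<Rightarrow> real \<Rightarrow> int \<Rightarrow> real" where
  "eps_weight \<alpha> \<beta> k = (if k = 1 then \<alpha> else if k = 0 then 1 - \<alpha> - \<beta> else if k = -1 then \<beta> else 0)"

definition eps_values :: "int set" where
  "eps_values = {1, 0, -1}"

definition eps3_weight :: "real \<Rightarrow> real \<Rightarrow> int \<times> int \<times> int \<Rightarrow> real" where
  "eps3_weight \<alpha> \<beta> e = eps_weight \<alpha> \<beta> (fst e) * eps_weight \<alpha> \<beta> (fst (snd e)) * eps_weight \<alpha> \<beta> (snd (snd e))"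

lemma pmf_eps_pmf:
  assumes "\<alpha> \<ge> 0" "\<beta> \<ge> 0" "\<alpha> + \<beta> \<le> 1"
  shows "pmf (eps_pmf \<alpha> \<beta>) k = eps_weight \<alpha> \<beta> k"
proof -
  have eq: "eps_pmf \<alpha> \<beta> = embed_pmf (eps_weight \<alpha> \<beta>)"
    by (simp add: eps_pmf_def eps_weight_def[abs_def])
  show ?thesis unfolding eq
  proof (rule pmf_embed_pmf)
    show "0 \<le> eps_weight \<alpha> \<beta> x" for x using assms by (simp add: eps_weight_def)
    have "(\<integral>\<^sup>+ x. ennreal (eps_weight \<alpha> \<beta> x) \<partial>count_space UNIV) =
            (\<Sum>x\<in>eps_values. ennreal (eps_weight \<alpha> \<beta> x))"
      by (rule nn_integral_count_space') (auto simp: eps_values_def eps_weight_def)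
    also have "\<dots> = ennreal (\<Sum>x\<in>eps_values. eps_weight \<alpha> \<beta> x)"
      using assms by (intro sum_ennreal) (auto simp: eps_weight_def)
    also have "(\<Sum>x\<in>eps_values. eps_weight \<alpha> \<beta> x) = 1"
      by (simp add: eps_values_def eps_weight_def)
    finally show "(\<integral>\<^sup>+ x. ennreal (eps_weight \<alpha> \<beta> x) \<partial>count_space UNIV) = 1" by simp
  qed
qed

lemma sum_eps_weight_Yval:
  assumes "a = 0 \<or> a = 1"
  shows "(\<Sum>x\<in>eps_values. eps_weight \<alpha> \<beta> x * H (Yval a x)) = u1 \<alpha> \<beta> a * H 1 + (1 - u1 \<alpha> \<beta> a) * H 0"
  using assms by (auto simp: eps_values_def eps_weight_def Yval_def u1_def algebra_simps)

definition bernoulli3_expectation :: "real \<Rightarrow> (real \<Rightarrow> real \<Rightarrow> real \<Rightarrow> real) \<Rightarrow> real" where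
  "bernoulli3_expectation q F =
     q * (q * (q * F 1 1 1 + (1 - q) * F 1 1 0) + (1 - q) * (q * F 1 0 1 + (1 - q) * F 1 0 0))
     + (1 - q) * (q * (q * F 0 1 1 + (1 - q) * F 0 1 0) + (1 - q) * (q * F 0 0 1 + (1 - q) * F 0 0 0))"

lemma sum_eps3_weight_Yval:
  assumes a: "a = 0 \<or> a = 1"
  shows "(\<Sum>e\<in>eps_values \<times> eps_values \<times> eps_values.
            F (Yval a (fst e)) (Yval a (fst (snd e))) (Yval a (snd (snd e))) * eps3_weight \<alpha> \<beta> e)
         = bernoulli3_expectation (u1 \<alpha> \<beta> a) F"
proof -
  let ?w = "eps_weight \<alpha> \<beta>" and ?q = "u1 \<alpha> \<beta> a"
  have z: "(\<Sum>z\<in>eps_values. ?w z * F u v (Yval a z)) = ?q * F u v 1 + (1 - ?q) * F u v 0" for u v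
    by (rule sum_eps_weight_Yval[OF a])
  have y: "(\<Sum>y\<in>eps_values. ?w y * (?q * F u (Yval a y) 1 + (1 - ?q) * F u (Yval a y) 0))
     = ?q * (?q * F u 1 1 + (1 - ?q) * F u 1 0) + (1 - ?q) * (?q * F u 0 1 + (1 - ?q) * F u 0 0)" for u
    by (rule sum_eps_weight_Yval[OF a, where H="\<lambda>v. ?q * F u v 1 + (1 - ?q) * F u v 0"])
  have x: "(\<Sum>x\<in>eps_values. ?w x * (?q * (?q * F (Yval a x) 1 1 + (1 - ?q) * F (Yval a x) 1 0)
            + (1 - ?q) * (?q * F (Yval a x) 0 1 + (1 - ?q) * F (Yval a x) 0 0)))
     = bernoulli3_expectation ?q F"
    unfolding bernoulli3_expectation_def
    by (rule sum_eps_weight_Yval[OF a, where H="\<lambda>v. ?q * (?q * F v 1 1 + (1 - ?q) * F v 1 0)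
            + (1 - ?q) * (?q * F v 0 1 + (1 - ?q) * F v 0 0)"])
  have "(\<Sum>e\<in>eps_values \<times> eps_values \<times> eps_values.
            F (Yval a (fst e)) (Yval a (fst (snd e))) (Yval a (snd (snd e))) * eps3_weight \<alpha> \<beta> e)
     = (\<Sum>x\<in>eps_values. ?w x * (\<Sum>y\<in>eps_values. ?w y *
          (\<Sum>z\<in>eps_values. ?w z * F (Yval a x) (Yval a y) (Yval a z))))"
    by (simp add: sum.cartesian_product eps3_weight_def split_def sum_distrib_left mult_ac)
  also have "\<dots> = bernoulli3_expectation ?q F"
    by (simp only: z y x)
  finally show ?thesis .
qed

(* The weights 1/2 and 1/3 match the normalisations of u2hat and u3hat relative to u1hat,
   so that (u1hat, u2hat, u3hat) is the average of pair_stat over the pairs. *)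
definition pair_stat :: "real \<Rightarrow> real \<Rightarrow> real \<Rightarrow> real^3" where
  "pair_stat y0 y1 y2 = vector [y0, \<bar>y1 - y0\<bar> / 2,
     (let d = y2 - 2 * y1 + y0 in if d = 1 \<or> d = -2 then 1 else 0) / 3]"

definition bernoulli_mean :: "real \<Rightarrow> real^3" where
  "bernoulli_mean q = vector [q, q * (1 - q), q * (1 - q)\<^sup>2]"

(* Covariance of pair_stat Y Y\<^sub>* Y\<^sub>*\<^sub>* for i.i.d. Bernoulli(q) entries; at q = \<alpha> and
   q = 1 - \<beta> it is Sigma at \<delta> = 0 and \<delta> = 1. *)
definition bernoulli_cov :: "real \<Rightarrow> real^3^3" where
  "bernoulli_cov q = (let k = q * (1 - q) in
    vector [vector [k, k * (1/2 - q), k * ((1 - q)\<^sup>2/3 - 2 * k/3)],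
            vector [k * (1/2 - q), k * (1/2 - k), (1 - q) * k * (1/3 - k)],
            vector [k * ((1 - q)\<^sup>2/3 - 2 * k/3), (1 - q) * k * (1/3 - k),
                    k * (1 - q) * (1/3 - k * (1 - q))]])"

lemma pair_stat_values:
  "pair_stat 1 1 1 = vector [1, 0, 0]" "pair_stat 1 1 0 = vector [1, 0, 0]"
  "pair_stat 1 0 1 = vector [1, 1/2, 0]" "pair_stat 1 0 0 = vector [1, 1/2, 1/3]"
  "pair_stat 0 1 1 = vector [0, 1/2, 0]" "pair_stat 0 1 0 = vector [0, 1/2, 1/3]"
  "pair_stat 0 0 1 = vector [0, 0, 1/3]" "pair_stat 0 0 0 = vector [0, 0, 0]"
  by (simp_all add: pair_stat_def)

lemma bernoulli3_expectation_pair_stat_centred: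
  "bernoulli3_expectation q (\<lambda>y0 y1 y2. (pair_stat y0 y1 y2 - bernoulli_mean q) $ i) = 0"
  using exhaust_3[of i]
  by (auto simp: bernoulli3_expectation_def pair_stat_values bernoulli_mean_def)
    (simp_all add: field_simps power2_eq_square)

lemma bernoulli3_expectation_pair_stat_cov:
  "bernoulli3_expectation q (\<lambda>y0 y1 y2. (pair_stat y0 y1 y2 - bernoulli_mean q) $ i *
                                       (pair_stat y0 y1 y2 - bernoulli_mean q) $ j)
     = bernoulli_cov q $ i $ j"
  using exhaust_3[of i] exhaust_3[of j]
  by (auto simp: bernoulli3_expectation_def pair_stat_values bernoulli_mean_def bernoulli_cov_def
      Let_def) (simp_all add: field_simps power2_eq_square)

definition mean_vec :: "real \<Rightarrow> real \<Rightarrow> real \<Rightarrow> real^3" where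
  "mean_vec \<alpha> \<beta> \<delta> = vector [u1 \<alpha> \<beta> \<delta>, u2 \<alpha> \<beta> \<delta>, u3 \<alpha> \<beta> \<delta>]"

lemma mean_vec_eq_bernoulli_mean:
  "a = 0 \<or> a = 1 \<Longrightarrow> mean_vec \<alpha> \<beta> a = bernoulli_mean (u1 \<alpha> \<beta> a)"
  by (auto simp: mean_vec_def bernoulli_mean_def u1_def u2_def u3_def algebra_simps power2_eq_square)

lemma Sigma_eq_bernoulli_cov:
  "a = 0 \<or> a = 1 \<Longrightarrow> Sigma \<alpha> \<beta> a $ i $ j = bernoulli_cov (u1 \<alpha> \<beta> a) $ i $ j"
  using exhaust_3[of i] exhaust_3[of j]
  by (auto simp: Sigma_def bernoulli_cov_def Let_def u1_def)

lemma Sigma_affine: "Sigma \<alpha> \<beta> \<delta> $ i $ j = (1 - \<delta>) * Sigma \<alpha> \<beta> 0 $ i $ j + \<delta> * Sigma \<alpha> \<beta> 1 $ i $ j"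
  using exhaust_3[of i] exhaust_3[of j] by (auto simp: Sigma_def Let_def)

lemma mean_vec_affine: "mean_vec \<alpha> \<beta> \<delta> = (1 - \<delta>) *\<^sub>R mean_vec \<alpha> \<beta> 0 + \<delta> *\<^sub>R mean_vec \<alpha> \<beta> 1"
  by (simp add: vec_eq_iff forall_3 mean_vec_def u1_def u2_def u3_def algebra_simps)

definition pair_dev :: "real \<Rightarrow> real \<Rightarrow> real \<Rightarrow> int \<times> int \<times> int \<Rightarrow> real^3" where
  "pair_dev \<alpha> \<beta> a e =
     pair_stat (Yval a (fst e)) (Yval a (fst (snd e))) (Yval a (snd (snd e))) - mean_vec \<alpha> \<beta> a"

definition l1_norm :: "real^'n \<Rightarrow> real" where
  "l1_norm t = (\<Sum>i\<in>UNIV. \<bar>t $ i\<bar>)"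

lemma l1_norm_scaleR_axis: "l1_norm (s *\<^sub>R axis i 1) = \<bar>s\<bar>"
proof -
  have "(\<Sum>j\<in>UNIV. \<bar>(s *\<^sub>R axis i (1::real)) $ j\<bar>) = (\<Sum>j\<in>UNIV. if j = i then \<bar>s\<bar> else 0)"
    by (intro sum.cong) (auto simp: axis_def)
  then show ?thesis by (simp add: l1_norm_def)
qed

lemma abs_inner_le_l1_norm:
  assumes "\<And>i. \<bar>z $ i\<bar> \<le> 1"
  shows "\<bar>t \<bullet> z\<bar> \<le> l1_norm t"
proof -
  have "\<bar>t \<bullet> z\<bar> \<le> (\<Sum>i\<in>UNIV. \<bar>t $ i * z $ i\<bar>)"
    unfolding inner_vec_def by (simp add: sum_abs)
  also have "\<dots> \<le> l1_norm t"
    unfolding l1_norm_def using assms by (intro sum_mono) (simp add: abs_mult mult_left_le)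
  finally show ?thesis .
qed

locale error_rates =
  fixes \<alpha> \<beta> :: real
  assumes alpha_nonneg: "\<alpha> \<ge> 0" and beta_nonneg: "\<beta> \<ge> 0" and alpha_beta_le: "\<alpha> + \<beta> \<le> 1"
begin

lemma set_eps3_pmf: "set_pmf (eps3_pmf \<alpha> \<beta>) \<subseteq> eps_values \<times> eps_values \<times> eps_values"
proof
  fix e assume "e \<in> set_pmf (eps3_pmf \<alpha> \<beta>)"
  then have "pmf (eps3_pmf \<alpha> \<beta>) e \<noteq> 0" by (simp add: set_pmf_iff)
  then show "e \<in> eps_values \<times> eps_values \<times> eps_values"
    by (cases e) (auto simp: eps3_pmf_def pmf_pair pmf_eps_pmf[OF alpha_nonneg beta_nonneg alpha_beta_le]
        eps_weight_def eps_values_def split: if_splits)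
qed

lemma integrable_eps3_pmf:
  "integrable (measure_pmf (eps3_pmf \<alpha> \<beta>)) (f :: _ \<Rightarrow> 'b::{banach, second_countable_topology})"
  by (rule integrable_measure_pmf_finite, rule finite_subset[OF set_eps3_pmf]) (simp add: eps_values_def)

lemma expectation_eps3_pmf:
  fixes f :: "int \<times> int \<times> int \<Rightarrow> real"
  shows "measure_pmf.expectation (eps3_pmf \<alpha> \<beta>) f =
           (\<Sum>e\<in>eps_values \<times> eps_values \<times> eps_values. f e * eps3_weight \<alpha> \<beta> e)"
proof -
  have "pmf (eps3_pmf \<alpha> \<beta>) e = eps3_weight \<alpha> \<beta> e" for e
    by (cases e) (simp add: eps3_pmf_def pmf_pair eps3_weight_def
        pmf_eps_pmf[OF alpha_nonneg beta_nonneg alpha_beta_le])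
  moreover have "measure_pmf.expectation (eps3_pmf \<alpha> \<beta>) f =
      (\<Sum>e\<in>eps_values \<times> eps_values \<times> eps_values. f e * pmf (eps3_pmf \<alpha> \<beta>) e)"
  proof (rule integral_measure_pmf_real)
    show "finite (eps_values \<times> eps_values \<times> eps_values)" by (simp add: eps_values_def)
  qed (use set_eps3_pmf in blast)
  ultimately show ?thesis by simp
qed

lemma abs_pair_dev_le_1:
  assumes "a = 0 \<or> a = 1"
  shows "\<bar>pair_dev \<alpha> \<beta> a e $ i\<bar> \<le> 1"
proof -
  have Y: "Yval a k = 0 \<or> Yval a k = 1" for k using assms by (auto simp: Yval_def)
  have stat: "0 \<le> pair_stat y0 y1 y2 $ i \<and> pair_stat y0 y1 y2 $ i \<le> 1"
    if "y0 = 0 \<or> y0 = 1" "y1 = 0 \<or> y1 = 1" "y2 = 0 \<or> y2 = 1" for y0 y1 y2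
    using that exhaust_3[of i] by (auto simp: pair_stat_def Let_def)
  have prod01: "0 \<le> x * y \<and> x * y \<le> 1" if "0 \<le> x" "x \<le> 1" "0 \<le> y" "y \<le> 1" for x y :: real
    using that by (auto intro: mult_le_one)
  have q: "0 \<le> u1 \<alpha> \<beta> a" "u1 \<alpha> \<beta> a \<le> 1"
    using assms alpha_nonneg beta_nonneg alpha_beta_le by (auto simp: u1_def)
  have "0 \<le> bernoulli_mean (u1 \<alpha> \<beta> a) $ i \<and> bernoulli_mean (u1 \<alpha> \<beta> a) $ i \<le> 1"
    using exhaust_3[of i] q prod01[of "u1 \<alpha> \<beta> a" "1 - u1 \<alpha> \<beta> a"]
      prod01[of "u1 \<alpha> \<beta> a" "(1 - u1 \<alpha> \<beta> a)\<^sup>2"]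
    by (auto simp: bernoulli_mean_def power_le_one)
  then show ?thesis
    using stat[OF Y Y Y, of "fst e" "fst (snd e)" "snd (snd e)"]
    by (simp add: pair_dev_def mean_vec_eq_bernoulli_mean[OF assms] abs_le_iff)
qed

lemma expectation_pair_dev_component:
  assumes a: "a = 0 \<or> a = 1"
  shows "measure_pmf.expectation (eps3_pmf \<alpha> \<beta>) (\<lambda>e. pair_dev \<alpha> \<beta> a e $ i) = 0"
proof -
  have "measure_pmf.expectation (eps3_pmf \<alpha> \<beta>) (\<lambda>e. pair_dev \<alpha> \<beta> a e $ i) =
      bernoulli3_expectation (u1 \<alpha> \<beta> a) (\<lambda>y0 y1 y2. (pair_stat y0 y1 y2 - bernoulli_mean (u1 \<alpha> \<beta> a)) $ i)"
    unfolding expectation_eps3_pmf pair_dev_def mean_vec_eq_bernoulli_mean[OF a]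
    by (rule sum_eps3_weight_Yval[OF a])
  then show ?thesis by (simp only: bernoulli3_expectation_pair_stat_centred)
qed

lemma expectation_pair_dev_product:
  assumes a: "a = 0 \<or> a = 1"
  shows "measure_pmf.expectation (eps3_pmf \<alpha> \<beta>) (\<lambda>e. pair_dev \<alpha> \<beta> a e $ i * pair_dev \<alpha> \<beta> a e $ j)
           = Sigma \<alpha> \<beta> a $ i $ j"
proof -
  have "measure_pmf.expectation (eps3_pmf \<alpha> \<beta>) (\<lambda>e. pair_dev \<alpha> \<beta> a e $ i * pair_dev \<alpha> \<beta> a e $ j) =
      bernoulli3_expectation (u1 \<alpha> \<beta> a) (\<lambda>y0 y1 y2. (pair_stat y0 y1 y2 - bernoulli_mean (u1 \<alpha> \<beta> a)) $ i *
                                                   (pair_stat y0 y1 y2 - bernoulli_mean (u1 \<alpha> \<beta> a)) $ j)"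
    unfolding expectation_eps3_pmf pair_dev_def mean_vec_eq_bernoulli_mean[OF a]
    by (rule sum_eps3_weight_Yval[OF a])
  then show ?thesis
    by (simp only: bernoulli3_expectation_pair_stat_cov Sigma_eq_bernoulli_cov[OF a])
qed

definition sigma_form :: "real^3 \<Rightarrow> real \<Rightarrow> real" where
  "sigma_form t \<delta> = t \<bullet> (Sigma \<alpha> \<beta> \<delta> *v t)"

lemma expectation_inner_pair_dev:
  assumes a: "a = 0 \<or> a = 1"
  shows "measure_pmf.expectation (eps3_pmf \<alpha> \<beta>) (\<lambda>e. t \<bullet> pair_dev \<alpha> \<beta> a e) = 0"
  using expectation_pair_dev_component[OF a]
  unfolding expectation_eps3_pmf inner_vec_def inner_real_def sum_mult_sum_swap by simp

lemma expectation_inner_pair_dev_sq: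
  assumes a: "a = 0 \<or> a = 1"
  shows "measure_pmf.expectation (eps3_pmf \<alpha> \<beta>) (\<lambda>e. (t \<bullet> pair_dev \<alpha> \<beta> a e)\<^sup>2) = sigma_form t a"
proof -
  have sq: "(t \<bullet> z)\<^sup>2 = (\<Sum>i\<in>UNIV. \<Sum>j\<in>UNIV. (t $ i * t $ j) * (z $ i * z $ j))" for z :: "real^3"
    by (simp add: inner_vec_def power2_eq_square sum_product mult_ac)
  show ?thesis
    using expectation_pair_dev_product[OF a]
    unfolding expectation_eps3_pmf sq sum_mult_double_sum_swap sigma_form_def inner_matrix_vector_mult_eq_sum
    by simp
qed

lemma sigma_form_nonneg:
  assumes a: "a = 0 \<or> a = 1"
  shows "sigma_form t a \<ge> 0"
proof -
  have "0 \<le> measure_pmf.expectation (eps3_pmf \<alpha> \<beta>) (\<lambda>e. (t \<bullet> pair_dev \<alpha> \<beta> a e)\<^sup>2)"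
    by (intro integral_nonneg_AE) auto
  then show ?thesis by (simp only: expectation_inner_pair_dev_sq[OF a])
qed

lemma sigma_form_le:
  assumes a: "a = 0 \<or> a = 1"
  shows "sigma_form t a \<le> (l1_norm t)\<^sup>2"
proof -
  have "sigma_form t a \<le> measure_pmf.expectation (eps3_pmf \<alpha> \<beta>) (\<lambda>e. (l1_norm t)\<^sup>2)"
    unfolding expectation_inner_pair_dev_sq[OF a, symmetric]
  proof (rule integral_mono[OF integrable_eps3_pmf integrable_eps3_pmf])
    fix e
    have "\<bar>t \<bullet> pair_dev \<alpha> \<beta> a e\<bar> \<le> l1_norm t"
      by (intro abs_inner_le_l1_norm abs_pair_dev_le_1[OF a])
    then show "(t \<bullet> pair_dev \<alpha> \<beta> a e)\<^sup>2 \<le> (l1_norm t)\<^sup>2"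
      by (metis abs_ge_zero power2_abs power_mono)
  qed
  then show ?thesis by simp
qed

lemma sigma_form_affine: "sigma_form t \<delta> = (1 - \<delta>) * sigma_form t 0 + \<delta> * sigma_form t 1"
proof -
  have "(t $ i * t $ j) * Sigma \<alpha> \<beta> \<delta> $ i $ j =
          (1 - \<delta>) * ((t $ i * t $ j) * Sigma \<alpha> \<beta> 0 $ i $ j) + \<delta> * ((t $ i * t $ j) * Sigma \<alpha> \<beta> 1 $ i $ j)"
    for i j by (subst Sigma_affine) (simp add: algebra_simps)
  then show ?thesis unfolding sigma_form_def inner_matrix_vector_mult_eq_sum
    by (simp only: sum.distrib sum_distrib_left[symmetric])
qed

lemma sigma_form_bounds:
  assumes "0 \<le> \<delta>" "\<delta> \<le> 1"
  shows "0 \<le> sigma_form t \<delta> \<and> sigma_form t \<delta> \<le> (l1_norm t)\<^sup>2"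
proof -
  have "0 \<le> sigma_form t 0" "sigma_form t 0 \<le> (l1_norm t)\<^sup>2"
       "0 \<le> sigma_form t 1" "sigma_form t 1 \<le> (l1_norm t)\<^sup>2"
    using sigma_form_nonneg sigma_form_le by auto
  then have "0 \<le> (1 - \<delta>) * sigma_form t 0 + \<delta> * sigma_form t 1"
    "(1 - \<delta>) * sigma_form t 0 + \<delta> * sigma_form t 1 \<le> (1 - \<delta>) * (l1_norm t)\<^sup>2 + \<delta> * (l1_norm t)\<^sup>2"
    using assms by (auto intro!: add_mono mult_left_mono)
  then show ?thesis by (simp add: sigma_form_affine[of t \<delta>] algebra_simps)
qed

lemma char_pair_dev_approx:
  assumes a: "a = 0 \<or> a = 1"
  shows "cmod (measure_pmf.expectation (eps3_pmf \<alpha> \<beta>) (\<lambda>e. cis (c * (t \<bullet> pair_dev \<alpha> \<beta> a e)))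
           - complex_of_real (1 - c\<^sup>2 * sigma_form t a / 2)) \<le> (\<bar>c\<bar> * l1_norm t)^3 / 6"
proof (rule expectation_cis_approx)
  show "\<bar>c * (t \<bullet> pair_dev \<alpha> \<beta> a e)\<bar> \<le> \<bar>c\<bar> * l1_norm t" for e
    unfolding abs_mult by (intro mult_left_mono abs_inner_le_l1_norm abs_pair_dev_le_1[OF a]) auto
  show "measure_pmf.expectation (eps3_pmf \<alpha> \<beta>) (\<lambda>e. c * (t \<bullet> pair_dev \<alpha> \<beta> a e)) = 0"
    using expectation_inner_pair_dev[OF a] by simp
  show "measure_pmf.expectation (eps3_pmf \<alpha> \<beta>) (\<lambda>e. (c * (t \<bullet> pair_dev \<alpha> \<beta> a e))\<^sup>2) = c\<^sup>2 * sigma_form t a"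
    using expectation_inner_pair_dev_sq[OF a] by (simp add: power_mult_distrib)
qed (simp_all add: measure_pmf.prob_space_axioms)

lemma char_pair_dev_approx_gauss:
  assumes a: "a = 0 \<or> a = 1" and c: "c \<ge> 0"
  shows "cmod (measure_pmf.expectation (eps3_pmf \<alpha> \<beta>) (\<lambda>e. cis (c * (t \<bullet> pair_dev \<alpha> \<beta> a e)))
           - complex_of_real (exp (- (c\<^sup>2 * sigma_form t a) / 2)))
         \<le> (c * l1_norm t)^3 / 6 + (c * l1_norm t)^4 / 8"
proof -
  let ?E = "measure_pmf.expectation (eps3_pmf \<alpha> \<beta>) (\<lambda>e. cis (c * (t \<bullet> pair_dev \<alpha> \<beta> a e)))"
  define y where "y = c\<^sup>2 * sigma_form t a / 2"
  have "c\<^sup>2 * sigma_form t a \<le> c\<^sup>2 * (l1_norm t)\<^sup>2"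
    using sigma_form_le[OF a, of t] by (intro mult_left_mono) auto
  then have y: "0 \<le> y" "y \<le> (c * l1_norm t)\<^sup>2 / 2"
    using sigma_form_nonneg[OF a, of t] by (simp_all add: y_def power_mult_distrib)
  have "cmod (complex_of_real (1 - y) - complex_of_real (exp (- y))) = \<bar>exp (- y) - (1 - y)\<bar>"
    by (simp only: of_real_diff[symmetric] norm_of_real abs_minus_commute)
  also have "\<dots> \<le> y\<^sup>2 / 2" by (rule exp_minus_approx[OF y(1)])
  also have "\<dots> \<le> ((c * l1_norm t)\<^sup>2 / 2)\<^sup>2 / 2"
    using y by (intro divide_right_mono power_mono) auto
  also have "\<dots> = (c * l1_norm t)^4 / 8"
    by (simp add: power2_eq_square power4_eq_xxxx)
  finally have gauss:
    "cmod (complex_of_real (1 - y) - complex_of_real (exp (- y))) \<le> (c * l1_norm t)^4 / 8" .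
  have taylor: "cmod (?E - complex_of_real (1 - y)) \<le> (c * l1_norm t)^3 / 6"
    using char_pair_dev_approx[OF a, of c t] c by (simp add: y_def)
  show ?thesis
    using norm_diff_triangle_le[OF taylor gauss] by (simp add: y_def)
qed

end

section \<open>The normalised statistic\<close>

lemma finite_pairs: "finite (pairs p)"
  unfolding pairs_def by (rule finite_subset[of _ "{..<p} \<times> {..<p}"]) auto

lemma card_pairs: "real (card (pairs p)) = real p * (real p - 1) / 2"
proof -
  have "2 * card (pairs p) = p * (p - 1)"
  proof (induction p)
    case (Suc p)
    have "pairs (Suc p) = pairs p \<union> (\<lambda>i. (i, p)) ` {..<p}"
      by (auto simp: pairs_def)
    moreover have "pairs p \<inter> (\<lambda>i. (i, p)) ` {..<p} = {}" by (auto simp: pairs_def)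
    ultimately have "card (pairs (Suc p)) = card (pairs p) + p"
      by (simp add: card_Un_disjoint finite_pairs card_image inj_on_def)
    with Suc show ?case by (cases p) (auto simp: algebra_simps)
  qed (simp add: pairs_def)
  then have "real (2 * card (pairs p)) = real (p * (p - 1))" by (simp only:)
  then show ?thesis by (cases p) (auto simp: algebra_simps)
qed

lemma card_pairs_ge_1: "p \<ge> 2 \<Longrightarrow> real (card (pairs p)) \<ge> 1"
  unfolding card_pairs using mult_mono[of 2 "real p" 1 "real p - 1"] by simp

lemma filterlim_card_pairs: "filterlim (\<lambda>p. real (card (pairs p))) at_top sequentially"
proof (rule filterlim_at_top_mono[OF filterlim_real_sequentially])
  show "eventually (\<lambda>p. real p \<le> real (card (pairs p))) sequentially"
    using eventually_ge_at_top[of "3::nat"]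
  proof eventually_elim
    case (elim p)
    then have "real p * 2 \<le> real p * (real p - 1)" by (intro mult_left_mono) auto
    then show ?case by (simp add: card_pairs)
  qed
qed

definition is_adjacency :: "nat \<Rightarrow> (nat \<Rightarrow> nat \<Rightarrow> real) \<Rightarrow> bool" where
  "is_adjacency p a \<longleftrightarrow> (\<forall>k\<in>pairs p. a (fst k) (snd k) = 0 \<or> a (fst k) (snd k) = 1)"

lemma is_adjacencyD: "is_adjacency p a \<Longrightarrow> k \<in> pairs p \<Longrightarrow> a (fst k) (snd k) = 0 \<or> a (fst k) (snd k) = 1"
  by (simp add: is_adjacency_def)

lemma dens_eq_mean: "dens p a = (\<Sum>k\<in>pairs p. a (fst k) (snd k)) / real (card (pairs p))"
  unfolding dens_def card_pairs by (simp add: split_def field_simps)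

lemma dens_bounds:
  assumes "is_adjacency p a"
  shows "0 \<le> dens p a \<and> dens p a \<le> 1"
proof -
  have "0 \<le> (\<Sum>k\<in>pairs p. a (fst k) (snd k))"
    using is_adjacencyD[OF assms] by (intro sum_nonneg) force
  moreover have "(\<Sum>k\<in>pairs p. a (fst k) (snd k)) \<le> real (card (pairs p))"
    using is_adjacencyD[OF assms] sum_mono[of "pairs p" "\<lambda>k. a (fst k) (snd k)" "\<lambda>_. 1"] by force
  ultimately show ?thesis by (cases "card (pairs p) = 0") (simp_all add: dens_eq_mean divide_le_eq_1)
qed

context error_rates
begin

definition scaled_stat :: "nat \<Rightarrow> (nat \<Rightarrow> nat \<Rightarrow> real) \<Rightarrow> (nat \<times> nat \<Rightarrow> int \<times> int \<times> int) \<Rightarrow> real^3" where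
  "scaled_stat p a \<omega> = sqrt (real p * (real p - 1) / 2) *\<^sub>R
     vector [u1hat p a \<omega> - u1 \<alpha> \<beta> (dens p a),
             u2hat p a \<omega> - u2 \<alpha> \<beta> (dens p a),
             u3hat p a \<omega> - u3 \<alpha> \<beta> (dens p a)]"

lemma scaled_stat_eq_sum:
  assumes p: "p \<ge> 2"
  shows "scaled_stat p a \<omega> =
           (1 / sqrt (real (card (pairs p)))) *\<^sub>R (\<Sum>k\<in>pairs p. pair_dev \<alpha> \<beta> (a (fst k) (snd k)) (\<omega> k))"
proof -
  define N where "N = real (card (pairs p))"
  have N: "N \<ge> 1" using card_pairs_ge_1[OF p] by (simp add: N_def)
  have pairs_ne: "pairs p \<noteq> {}" using N by (auto simp: N_def)
  let ?stat = "\<lambda>k. pair_stat (Yval (a (fst k) (snd k)) (fst (\<omega> k)))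
                 (Yval (a (fst k) (snd k)) (fst (snd (\<omega> k)))) (Yval (a (fst k) (snd k)) (snd (snd (\<omega> k))))"
  have uhat: "vector [u1hat p a \<omega>, u2hat p a \<omega>, u3hat p a \<omega>] = (1 / N) *\<^sub>R (\<Sum>k\<in>pairs p. ?stat k)"
    by (simp add: vec_eq_iff forall_3 sum_component u1hat_def u2hat_def u3hat_def pair_stat_def
        N_def card_pairs split_def sum_divide_distrib[symmetric] field_simps)
  have "(\<Sum>k\<in>pairs p. mean_vec \<alpha> \<beta> (a (fst k) (snd k))) = N *\<^sub>R mean_vec \<alpha> \<beta> (dens p a)"
    unfolding N_def dens_eq_mean
    by (rule sum_affine_eq_card_scaleR_mean[OF finite_pairs pairs_ne,
          where b="mean_vec \<alpha> \<beta> 0" and c="mean_vec \<alpha> \<beta> 1 - mean_vec \<alpha> \<beta> 0"])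
       (subst mean_vec_affine, simp add: algebra_simps)
  then have mean: "mean_vec \<alpha> \<beta> (dens p a) = (1 / N) *\<^sub>R (\<Sum>k\<in>pairs p. mean_vec \<alpha> \<beta> (a (fst k) (snd k)))"
    using N by simp
  have "scaled_stat p a \<omega> =
      sqrt N *\<^sub>R (vector [u1hat p a \<omega>, u2hat p a \<omega>, u3hat p a \<omega>] - mean_vec \<alpha> \<beta> (dens p a))"
    by (simp add: scaled_stat_def N_def card_pairs vec_eq_iff forall_3 mean_vec_def)
  also have "\<dots> = (sqrt N / N) *\<^sub>R (\<Sum>k\<in>pairs p. ?stat k - mean_vec \<alpha> \<beta> (a (fst k) (snd k)))"
    by (simp add: uhat mean sum_subtractf scaleR_diff_right)
  also have "sqrt N / N = 1 / sqrt N"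
    using N by (simp add: field_simps flip: real_sqrt_mult)
  finally show ?thesis by (simp add: N_def pair_dev_def)
qed

definition stat_law :: "nat \<Rightarrow> (nat \<Rightarrow> nat \<Rightarrow> real) \<Rightarrow> (real^3) measure" where
  "stat_law p a = distr (measure_pmf (err_pmf \<alpha> \<beta> p)) borel (scaled_stat p a)"

lemma prob_space_stat_law: "prob_space (stat_law p a)"
  unfolding stat_law_def by (rule measure_pmf.prob_space_distr) simp

lemma sets_stat_law: "sets (stat_law p a) = sets borel"
  by (simp add: stat_law_def)

lemma integral_stat_law:
  fixes g :: "real^3 \<Rightarrow> 'b::{banach, second_countable_topology}"
  assumes "continuous_on UNIV g"
  shows "(\<integral>x. g x \<partial>stat_law p a) = measure_pmf.expectation (err_pmf \<alpha> \<beta> p) (\<lambda>\<omega>. g (scaled_stat p a \<omega>))"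
  unfolding stat_law_def
  by (rule integral_distr) (simp_all add: borel_measurable_continuous_onI[OF assms])

lemma char_stat_law_eq_prod:
  assumes p: "p \<ge> 2"
  shows "char_vec (stat_law p a) t =
           (\<Prod>k\<in>pairs p. measure_pmf.expectation (eps3_pmf \<alpha> \<beta>)
              (\<lambda>e. cis (1 / sqrt (real (card (pairs p))) * (t \<bullet> pair_dev \<alpha> \<beta> (a (fst k) (snd k)) e))))"
proof -
  have "char_vec (stat_law p a) t = measure_pmf.expectation (err_pmf \<alpha> \<beta> p) (\<lambda>\<omega>. cis (t \<bullet> scaled_stat p a \<omega>))"
    unfolding char_vec_def by (rule integral_stat_law) (intro continuous_intros)
  also have "\<dots> = measure_pmf.expectation (err_pmf \<alpha> \<beta> p) (\<lambda>\<omega>. \<Prod>k\<in>pairs p.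
      cis (1 / sqrt (real (card (pairs p))) * (t \<bullet> pair_dev \<alpha> \<beta> (a (fst k) (snd k)) (\<omega> k))))"
    by (simp add: scaled_stat_eq_sum[OF p] inner_sum_right sum_distrib_left cis_sum[OF finite_pairs])
  also have "\<dots> = (\<Prod>k\<in>pairs p. measure_pmf.expectation (eps3_pmf \<alpha> \<beta>)
              (\<lambda>e. cis (1 / sqrt (real (card (pairs p))) * (t \<bullet> pair_dev \<alpha> \<beta> (a (fst k) (snd k)) e))))"
    unfolding err_pmf_def by (rule expectation_prod_Pi_pmf_complex[OF finite_pairs]) simp
  finally show ?thesis .
qed

lemma sum_sigma_form_eq:
  assumes p: "p \<ge> 2"
  shows "(\<Sum>k\<in>pairs p. sigma_form t (a (fst k) (snd k))) = real (card (pairs p)) * sigma_form t (dens p a)"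
proof -
  have "pairs p \<noteq> {}" using card_pairs_ge_1[OF p] by auto
  then show ?thesis
    unfolding dens_eq_mean
    by (rule sum_affine_eq_card_scaleR_mean[OF finite_pairs _,
          where b="sigma_form t 0" and c="sigma_form t 1 - sigma_form t 0", simplified])
       (subst sigma_form_affine, simp add: algebra_simps)
qed

lemma char_stat_law_approx:
  assumes p: "p \<ge> 2"
    and a: "is_adjacency p a"
  shows "cmod (char_vec (stat_law p a) t - complex_of_real (exp (- sigma_form t (dens p a) / 2)))
           \<le> l1_norm t ^ 3 / (6 * sqrt (real (card (pairs p)))) + l1_norm t ^ 4 / (8 * real (card (pairs p)))"
proof -
  define N where "N = real (card (pairs p))"
  define c where "c = 1 / sqrt N"
  have N: "N \<ge> 1" using card_pairs_ge_1[OF p] by (simp add: N_def)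
  have c: "c \<ge> 0" "c\<^sup>2 = 1 / N" using N by (simp_all add: c_def power_divide)
  define A where "A k = measure_pmf.expectation (eps3_pmf \<alpha> \<beta>)
                          (\<lambda>e. cis (c * (t \<bullet> pair_dev \<alpha> \<beta> (a (fst k) (snd k)) e)))" for k
  define B where "B k = complex_of_real (exp (- (c\<^sup>2 * sigma_form t (a (fst k) (snd k))) / 2))" for k
  have "(\<Sum>k\<in>pairs p. - (c\<^sup>2 * sigma_form t (a (fst k) (snd k))) / 2) = - sigma_form t (dens p a) / 2"
    using N by (simp add: sum_negf sum_divide_distrib[symmetric] sum_distrib_left[symmetric]
        sum_sigma_form_eq[OF p] c(2) N_def)
  then have "exp (- sigma_form t (dens p a) / 2) =
               exp (\<Sum>k\<in>pairs p. - (c\<^sup>2 * sigma_form t (a (fst k) (snd k))) / 2)"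
    by (simp only:)
  then have gauss: "complex_of_real (exp (- sigma_form t (dens p a) / 2)) = (\<Prod>k\<in>pairs p. B k)"
    by (simp add: B_def exp_sum[OF finite_pairs])
  have "cmod (char_vec (stat_law p a) t - complex_of_real (exp (- sigma_form t (dens p a) / 2)))
          = cmod ((\<Prod>k\<in>pairs p. A k) - (\<Prod>k\<in>pairs p. B k))"
    unfolding char_stat_law_eq_prod[OF p] gauss by (simp add: A_def c_def N_def)
  also have "\<dots> \<le> (\<Sum>k\<in>pairs p. cmod (A k - B k))"
  proof (rule norm_prod_diff)
    show "cmod (A k) \<le> 1" for k
      unfolding A_def by (rule order.trans[OF integral_norm_bound]) simp
    show "cmod (B k) \<le> 1" if "k \<in> pairs p" for k
      using sigma_form_nonneg[OF is_adjacencyD[OF a that], of t] by (simp add: B_def)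
  qed
  also have "\<dots> \<le> (\<Sum>k\<in>pairs p. (c * l1_norm t)^3 / 6 + (c * l1_norm t)^4 / 8)"
    unfolding A_def B_def by (intro sum_mono char_pair_dev_approx_gauss is_adjacencyD[OF a] c(1))
  also have "\<dots> = N * ((c * l1_norm t)^3 / 6 + (c * l1_norm t)^4 / 8)"
    by (simp add: N_def)
  also have "\<dots> = l1_norm t ^ 3 / (6 * sqrt N) + l1_norm t ^ 4 / (8 * N)"
  proof -
    have "N * c^3 = 1 / sqrt N" "N * c^4 = 1 / N"
      using N by (simp_all add: c_def power_divide field_simps power3_eq_cube power4_eq_xxxx
          flip: real_sqrt_mult)
    moreover have "N * ((c * l1_norm t)^3 / 6 + (c * l1_norm t)^4 / 8) =
        (N * c^3) * l1_norm t ^ 3 / 6 + (N * c^4) * l1_norm t ^ 4 / 8"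
      by (simp add: power_mult_distrib algebra_simps)
    ultimately show ?thesis by simp
  qed
  finally show ?thesis by (simp add: N_def)
qed

lemma char_stat_law_minus_gauss_tendsto_zero:
  assumes "\<And>p. is_adjacency p (A p)"
  shows "(\<lambda>p. char_vec (stat_law p (A p)) t - complex_of_real (exp (- sigma_form t (dens p (A p)) / 2)))
           \<longlonglongrightarrow> 0"
proof (rule Lim_null_comparison)
  let ?N = "\<lambda>p. real (card (pairs p))"
  show "eventually (\<lambda>p.
          norm (char_vec (stat_law p (A p)) t - complex_of_real (exp (- sigma_form t (dens p (A p)) / 2)))
          \<le> l1_norm t ^ 3 / 6 * inverse (sqrt (?N p)) + l1_norm t ^ 4 / 8 * inverse (?N p)) sequentially"
    using eventually_ge_at_top[of 2]
  proof eventually_elim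
    case (elim p)
    have "x / (d * y) = x / d * inverse y" for x d y :: real
      by (simp add: divide_inverse)
    with char_stat_law_approx[OF elim assms, of t] show ?case by simp
  qed
  have "(\<lambda>p. inverse (sqrt (?N p))) \<longlonglongrightarrow> 0"
    by (rule tendsto_inverse_0_at_top[OF filterlim_compose[OF sqrt_at_top filterlim_card_pairs]])
  moreover have "(\<lambda>p. inverse (?N p)) \<longlonglongrightarrow> 0"
    by (rule tendsto_inverse_0_at_top[OF filterlim_card_pairs])
  ultimately show "(\<lambda>p. l1_norm t ^ 3 / 6 * inverse (sqrt (?N p)) + l1_norm t ^ 4 / 8 * inverse (?N p)) \<longlonglongrightarrow> 0"
    by (intro tendsto_add_zero tendsto_mult_right_zero)
qed

lemma Re_one_minus_gauss_le:
  assumes "0 \<le> \<delta>" "\<delta> \<le> 1" "0 < s" "s \<le> 1"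
  shows "Re (1 - complex_of_real (exp (- sigma_form (s *\<^sub>R axis i 1) \<delta> / 2))) \<le> s\<^sup>2 / 2"
proof -
  let ?q = "sigma_form (s *\<^sub>R axis i 1) \<delta>"
  have q: "0 \<le> ?q" "?q \<le> s\<^sup>2"
    using sigma_form_bounds[OF assms(1,2), of "s *\<^sub>R axis i 1"] by (simp_all add: l1_norm_scaleR_axis)
  have "Re (1 - complex_of_real (exp (- ?q / 2))) \<le> cmod (1 - complex_of_real (exp (- ?q / 2)))"
    by (rule complex_Re_le_cmod)
  also have "\<dots> \<le> ?q / 2" by (rule cmod_one_minus_exp_le[OF q(1)])
  finally show ?thesis using q(2) by simp
qed

lemma Re_one_minus_char_stat_law_le:
  assumes p: "p \<ge> 2" and a: "is_adjacency p a" and s: "0 < s" "s \<le> 1"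
  shows "Re (1 - char_vec (stat_law p a) (s *\<^sub>R axis i 1)) \<le> s\<^sup>2"
proof -
  let ?t = "s *\<^sub>R axis i 1" and ?N = "real (card (pairs p))"
  let ?g = "complex_of_real (exp (- sigma_form ?t (dens p a) / 2))"
  have N: "?N \<ge> 1" by (rule card_pairs_ge_1[OF p])
  have "Re (1 - char_vec (stat_law p a) ?t) = Re (1 - ?g) - Re (char_vec (stat_law p a) ?t - ?g)"
    by simp
  also have "\<dots> \<le> s\<^sup>2 / 2 + cmod (char_vec (stat_law p a) ?t - ?g)"
    using Re_one_minus_gauss_le[OF conjunct1[OF dens_bounds[OF a]] conjunct2[OF dens_bounds[OF a]] s, of i]
      abs_Re_le_cmod[of "char_vec (stat_law p a) ?t - ?g"] by linarith
  also have "cmod (char_vec (stat_law p a) ?t - ?g) \<le> s ^ 3 / (6 * sqrt ?N) + s ^ 4 / (8 * ?N)"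
    using char_stat_law_approx[OF p a, of ?t] s by (simp add: l1_norm_scaleR_axis)
  also have "\<dots> \<le> s\<^sup>2 / 6 + s\<^sup>2 / 8"
  proof (intro add_mono)
    have "s ^ 3 / (6 * sqrt ?N) \<le> s ^ 3 / 6" "s ^ 4 / (8 * ?N) \<le> s ^ 4 / 8"
      using N s by (intro divide_left_mono; simp)+
    moreover have "s ^ 3 \<le> s\<^sup>2" "s ^ 4 \<le> s\<^sup>2"
      using s by (simp_all add: power_decreasing)
    ultimately show "s ^ 3 / (6 * sqrt ?N) \<le> s\<^sup>2 / 6" "s ^ 4 / (8 * ?N) \<le> s\<^sup>2 / 8"
      by simp_all
  qed
  finally show ?thesis using zero_le_power2[of s] by linarith
qed

lemma tight_seq_stat_law:
  assumes "\<And>p. is_adjacency p (A p)"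
  shows "tight_seq (\<lambda>p. stat_law p (A p))"
  using prob_space_stat_law sets_stat_law
proof (rule tight_seq_if_char_near_zero[where C=1])
  show "eventually (\<lambda>p. \<forall>i s. 0 < s \<longrightarrow> s \<le> 1 \<longrightarrow>
          Re (1 - char_vec (stat_law p (A p)) (s *\<^sub>R axis i 1)) \<le> 1 * s\<^sup>2) sequentially"
    using eventually_ge_at_top[of 2]
  proof eventually_elim
    case (elim p)
    show ?case using Re_one_minus_char_stat_law_le[OF elim assms] by simp
  qed
qed

lemma char_vec_mvnormal0:
  "is_mvnormal0 (Sigma \<alpha> \<beta> \<delta>) \<mu> \<Longrightarrow> char_vec \<mu> t = complex_of_real (exp (- sigma_form t \<delta> / 2))"
  by (simp add: is_mvnormal0_def char_vec_def sigma_form_def)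

lemma tight_seq_mvnormal0:
  assumes "\<And>p. is_mvnormal0 (Sigma \<alpha> \<beta> (\<delta> p)) (\<mu> p)" "\<And>p. 0 \<le> \<delta> p \<and> \<delta> p \<le> 1"
  shows "tight_seq \<mu>"
proof (rule tight_seq_if_char_near_zero[where C=1])
  show "prob_space (\<mu> p)" "sets (\<mu> p) = sets borel" for p
    using assms(1)[of p] by (simp_all add: is_mvnormal0_def)
  show "eventually (\<lambda>p. \<forall>i s. 0 < s \<longrightarrow> s \<le> 1 \<longrightarrow>
          Re (1 - char_vec (\<mu> p) (s *\<^sub>R axis i 1)) \<le> 1 * s\<^sup>2) sequentially"
  proof (intro always_eventually allI impI)
    fix p i and s :: real assume "0 < s" "s \<le> 1"
    with assms(2)[of p] have "Re (1 - char_vec (\<mu> p) (s *\<^sub>R axis i 1)) \<le> s\<^sup>2 / 2"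
      unfolding char_vec_mvnormal0[OF assms(1)] by (intro Re_one_minus_gauss_le) auto
    then show "Re (1 - char_vec (\<mu> p) (s *\<^sub>R axis i 1)) \<le> 1 * s\<^sup>2"
      using zero_le_power2[of s] by linarith
  qed
qed

end

theorem lemma1:
  fixes \<alpha> \<beta> :: real
    and A :: "nat \<Rightarrow> nat \<Rightarrow> nat \<Rightarrow> real"
    and \<mu> :: "nat \<Rightarrow> (real^3) measure"
  assumes "\<alpha> \<ge> 0" and "\<beta> \<ge> 0" and "\<alpha> + \<beta> \<le> 1"
    and A01: "\<And>p i j. i < p \<Longrightarrow> j < p \<Longrightarrow> A p i j \<in> {0, 1}"
    and Asym: "\<And>p i j. i < p \<Longrightarrow> j < p \<Longrightarrow> A p i j = A p j i"
    and Adiag: "\<And>p i. i < p \<Longrightarrow> A p i i = 0"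
    and N1: "filterlim (\<lambda>p. real p * (real p - 1) * dens p (A p)) at_top sequentially"
    and N2: "filterlim (\<lambda>p. real p * (real p - 1) * (1 - dens p (A p))) at_top sequentially"
    and gauss: "\<And>p. is_mvnormal0 (Sigma \<alpha> \<beta> (dens p (A p))) (\<mu> p)"
  shows "\<forall>f :: real^3 \<Rightarrow> real. bounded (range f) \<and> continuous_on UNIV f \<longrightarrow>
    (\<lambda>p. measure_pmf.expectation (err_pmf \<alpha> \<beta> p)
            (\<lambda>\<omega>. f (sqrt (real p * (real p - 1) / 2) *\<^sub>R
               vector [u1hat p (A p) \<omega> - u1 \<alpha> \<beta> (dens p (A p)),
                       u2hat p (A p) \<omega> - u2 \<alpha> \<beta> (dens p (A p)),
                       u3hat p (A p) \<omega> - u3 \<alpha> \<beta> (dens p (A p))]))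
          - (\<integral>x. f x \<partial>\<mu> p))
    \<longlonglongrightarrow> 0"
proof (intro allI impI)
  \<comment> \<open>Only the entries with \<open>i < j\<close> enter, and at each \<open>p\<close> the statistic is compared with the
    Gaussian of covariance \<open>Sigma \<alpha> \<beta> (dens p (A p))\<close> itself, for which \<open>N \<longrightarrow> \<infinity>\<close> suffices.\<close>
  fix f :: "real^3 \<Rightarrow> real"
  assume f: "bounded (range f) \<and> continuous_on UNIV f"
  then obtain B where fB: "\<And>x. \<bar>f x\<bar> \<le> B" unfolding bounded_iff by fastforce
  interpret error_rates \<alpha> \<beta> by unfold_locales (use assms(1-3) in auto)
  have adj: "is_adjacency p (A p)" for p
    using A01 by (auto simp: is_adjacency_def pairs_def)
  have \<mu>: "prob_space (\<mu> p)" "sets (\<mu> p) = sets borel" for p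
    using gauss[of p] by (simp_all add: is_mvnormal0_def)
  have "(\<lambda>p. char_vec (stat_law p (A p)) t - char_vec (\<mu> p) t) \<longlonglongrightarrow> 0" for t
    using char_stat_law_minus_gauss_tendsto_zero[OF adj] by (simp add: char_vec_mvnormal0[OF gauss])
  moreover have "tight_seq \<mu>"
    by (rule tight_seq_mvnormal0[OF gauss dens_bounds[OF adj]])
  ultimately have "(\<lambda>p. (\<integral>x. f x \<partial>stat_law p (A p)) - (\<integral>x. f x \<partial>\<mu> p)) \<longlonglongrightarrow> 0"
    using f fB by (intro integral_diff_tendsto_zero_from_char[OF prob_space_stat_law sets_stat_law \<mu>
          _ tight_seq_stat_law[OF adj]]) auto
  then show "(\<lambda>p. measure_pmf.expectation (err_pmf \<alpha> \<beta> p)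
            (\<lambda>\<omega>. f (sqrt (real p * (real p - 1) / 2) *\<^sub>R
               vector [u1hat p (A p) \<omega> - u1 \<alpha> \<beta> (dens p (A p)),
                       u2hat p (A p) \<omega> - u2 \<alpha> \<beta> (dens p (A p)),
                       u3hat p (A p) \<omega> - u3 \<alpha> \<beta> (dens p (A p))]))
          - (\<integral>x. f x \<partial>\<mu> p)) \<longlonglongrightarrow> 0"
    using f by (simp add: integral_stat_law scaled_stat_def)
qed

end
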